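(* Let $\mathcal{L}$ be an unbounded graphon shift operator. Then there exists a sequence of weighted graphs $(G_n)_n$ with GSOs $(\mathbf{\Delta}_n)_n$ such that $G_n\xrightarrow[n\to\infty]{U}\mathcal{L}$.
   Context: A graph with GSO is $G=(V,E,\mathbf{\Delta})$, $V=\{1,\dots,N\}$, $\mathbf{\Delta}\in\mathbb{R}^{N\times N}$ symmetric; its GWM is $\boldsymbol{A}=N\mathbf{\Delta}$. For a permutation $\pi$ of $\{1,\dots,N\}$, $\pi(\boldsymbol{A})=(\boldsymbol{A}_{\pi(i)\pi(j)})_{i,j}$. With $P_k=[(k-1)/N,k/N)$, the induced graphon is $W_{\boldsymbol{A}}(u,v)=\sum_{i,j}\boldsymbol{A}_{ij}\chi_{P_i}(u)\chi_{P_j}(v)$. A graphon is a bounded symmetric measurable $W:[0,1]^2\to\mathbb{R}$ and $T_W\psi(v)=\int_0^1W(v,u)\psi(u)du$ on $L^2[0,1]$. Let $\mathcal{L}$ be a self-adjoint operator defined on a dense subspace of $L^2[0,1]$ whose spectrum consists only of eigenvalues $\lambda_j$, with eigenspaces $W_j$ and orthogonal projections $P_j$ onto them. For $\lambda>0$ the spectral projection is $P_{\mathcal{L}}(\lambda)=\sum_{|\lambda_j|\le\lambda}P_j$ (projection onto the Paley–Wiener space $\bigoplus\{W_j:|\lambda_j|\le\lambda\}$). $\mathcal{L}$ is an unbounded graphon shift operator if for every $\lambda>0$ there is a graphon $W^\lambda$ with $\mathcal{L}P_{\mathcal{L}}(\lambda)=T_{W^\lambda}$. A sequence of graphs $(G_n)_n$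 with GWMs $(\boldsymbol{A}_n)_n$ converges to $\mathcal{L}$, written $G_n\xrightarrow{U}\mathcal{L}$, if there exist permutations $\pi_n$ of the node sets such that for every $\lambda$, $\|P_{\mathcal{L}}(\lambda)T_{W_{\pi_n(\boldsymbol{A}_n)}}P_{\mathcal{L}}(\lambda)-\mathcal{L}P_{\mathcal{L}}(\lambda)\|_{L^2[0,1]\to L^2[0,1]}\to 0$. *)

theory Defs
  imports "HOL-Analysis.Analysis" "HOL-Combinatorics.Permutations"
begin

definition sq_int :: "(real \<Rightarrow> real) \<Rightarrow> bool" where
  "sq_int f \<longleftrightarrow> f \<in> borel_measurable (lebesgue_on {0..1}) \<and>
                  integrable (lebesgue_on {0..1}) (\<lambda>x. (f x)\<^sup>2)"

definition l2_inner :: "(real \<Rightarrow> real) \<Rightarrow> (real \<Rightarrow> real) \<Rightarrow> real" where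
  "l2_inner f g = (LINT x | lebesgue_on {0..1}. f x * g x)"

definition l2_norm :: "(real \<Rightarrow> real) \<Rightarrow> real" where
  "l2_norm f = sqrt (l2_inner f f)"

text \<open>Equality as elements of L^2[0,1] (almost everywhere on [0,1]).\<close>
definition ae_eq :: "(real \<Rightarrow> real) \<Rightarrow> (real \<Rightarrow> real) \<Rightarrow> bool" where
  "ae_eq f g \<longleftrightarrow> (AE x in lebesgue_on {0..1}. f x = g x)"

definition lin_span :: "(real \<Rightarrow> real) set \<Rightarrow> (real \<Rightarrow> real) set" where
  "lin_span U = {(\<lambda>x. \<Sum>i<k. c i * g i x) | (k::nat) c g. \<forall>i<k. g i \<in> U}"

definition l2_closure :: "(real \<Rightarrow> real) set \<Rightarrow> (real \<Rightarrow> real) set" where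
  "l2_closure U = {f. sq_int f \<and> (\<forall>e>0. \<exists>g\<in>U. l2_norm (\<lambda>x. f x - g x) < e)}"

text \<open>An operator is given by its domain D (a subspace of L^2[0,1]) and its action L on D.\<close>
definition self_adjoint_op :: "(real \<Rightarrow> real) set \<Rightarrow> ((real \<Rightarrow> real) \<Rightarrow> (real \<Rightarrow> real)) \<Rightarrow> bool" where
  "self_adjoint_op D L \<longleftrightarrow>
     D \<subseteq> {f. sq_int f} \<and>
     (\<forall>f\<in>D. sq_int (L f)) \<and>
     (\<forall>f\<in>D. \<forall>g\<in>D. \<forall>a b::real. (\<lambda>x. a * f x + b * g x) \<in> D \<and>
          ae_eq (L (\<lambda>x. a * f x + b * g x)) (\<lambda>x. a * L f x + b * L g x)) \<and>
     (\<forall>f. sq_int f \<longrightarrow> (\<forall>e>0. \<exists>g\<in>D. l2_norm (\<lambda>x. f x - g x) < e)) \<and>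
     (\<forall>f\<in>D. \<forall>g\<in>D. l2_inner (L f) g = l2_inner f (L g)) \<and>
     (\<forall>g. sq_int g \<longrightarrow>
          ((\<exists>h. sq_int h \<and> (\<forall>f\<in>D. l2_inner (L f) g = l2_inner f h)) \<longleftrightarrow> g \<in> D))"

definition eigenspace_op :: "(real \<Rightarrow> real) set \<Rightarrow> ((real \<Rightarrow> real) \<Rightarrow> (real \<Rightarrow> real)) \<Rightarrow> real \<Rightarrow> (real \<Rightarrow> real) set" where
  "eigenspace_op D L \<mu> = {f\<in>D. ae_eq (L f) (\<lambda>x. \<mu> * f x)}"

definition is_eigenvalue :: "(real \<Rightarrow> real) set \<Rightarrow> ((real \<Rightarrow> real) \<Rightarrow> (real \<Rightarrow> real)) \<Rightarrow> real \<Rightarrow> bool" where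
  "is_eigenvalue D L \<mu> \<longleftrightarrow> (\<exists>f\<in>eigenspace_op D L \<mu>. l2_norm f \<noteq> 0)"

definition in_resolvent :: "(real \<Rightarrow> real) set \<Rightarrow> ((real \<Rightarrow> real) \<Rightarrow> (real \<Rightarrow> real)) \<Rightarrow> real \<Rightarrow> bool" where
  "in_resolvent D L z \<longleftrightarrow>
     (\<forall>g. sq_int g \<longrightarrow> (\<exists>f\<in>D. ae_eq (\<lambda>x. L f x - z * f x) g)) \<and>
     (\<exists>C. \<forall>f\<in>D. l2_norm f \<le> C * l2_norm (\<lambda>x. L f x - z * f x))"

definition spectrum_only_eigenvalues :: "(real \<Rightarrow> real) set \<Rightarrow> ((real \<Rightarrow> real) \<Rightarrow> (real \<Rightarrow> real)) \<Rightarrow> bool" where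
  "spectrum_only_eigenvalues D L \<longleftrightarrow> (\<forall>z. \<not> in_resolvent D L z \<longrightarrow> is_eigenvalue D L z)"

definition PW_space :: "(real \<Rightarrow> real) set \<Rightarrow> ((real \<Rightarrow> real) \<Rightarrow> (real \<Rightarrow> real)) \<Rightarrow> real \<Rightarrow> (real \<Rightarrow> real) set" where
  "PW_space D L lam = l2_closure (lin_span (\<Union>{eigenspace_op D L \<mu> | \<mu>. \<bar>\<mu>\<bar> \<le> lam}))"

definition spec_proj :: "(real \<Rightarrow> real) set \<Rightarrow> ((real \<Rightarrow> real) \<Rightarrow> (real \<Rightarrow> real)) \<Rightarrow> real \<Rightarrow> (real \<Rightarrow> real) \<Rightarrow> (real \<Rightarrow> real)" where
  "spec_proj D L lam f = (SOME p. p \<in> PW_space D L lam \<and>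
        (\<forall>v\<in>PW_space D L lam. l2_inner (\<lambda>x. f x - p x) v = 0))"

definition graphon :: "(real \<Rightarrow> real \<Rightarrow> real) \<Rightarrow> bool" where
  "graphon W \<longleftrightarrow>
     (\<lambda>(u,v). W u v) \<in> borel_measurable (lebesgue_on ({0..1} \<times> {0..1})) \<and>
     (\<exists>B. \<forall>u\<in>{0..1}. \<forall>v\<in>{0..1}. \<bar>W u v\<bar> \<le> B) \<and>
     (\<forall>u\<in>{0..1}. \<forall>v\<in>{0..1}. W u v = W v u)"

definition T_op :: "(real \<Rightarrow> real \<Rightarrow> real) \<Rightarrow> (real \<Rightarrow> real) \<Rightarrow> (real \<Rightarrow> real)" where
  "T_op W \<psi> = (\<lambda>v. LINT u | lebesgue_on {0..1}. W v u * \<psi> u)"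

definition unbounded_GSO :: "(real \<Rightarrow> real) set \<Rightarrow> ((real \<Rightarrow> real) \<Rightarrow> (real \<Rightarrow> real)) \<Rightarrow> bool" where
  "unbounded_GSO D L \<longleftrightarrow>
     self_adjoint_op D L \<and> spectrum_only_eigenvalues D L \<and>
     (\<forall>lam>0. \<exists>W. graphon W \<and>
        (\<forall>f. sq_int f \<longrightarrow> spec_proj D L lam f \<in> D \<and>
                           ae_eq (L (spec_proj D L lam f)) (T_op W f)))"

text \<open>A weighted graph on nodes {1..N} with symmetric GSO Delta.\<close>
definition is_GSO :: "nat \<Rightarrow> (nat \<Rightarrow> nat \<Rightarrow> real) \<Rightarrow> bool" where
  "is_GSO N \<Delta> \<longleftrightarrow> N \<ge> 1 \<and> (\<forall>i\<in>{1..N}. \<forall>j\<in>{1..N}. \<Delta> i j = \<Delta> j i)"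

definition GWM :: "nat \<Rightarrow> (nat \<Rightarrow> nat \<Rightarrow> real) \<Rightarrow> (nat \<Rightarrow> nat \<Rightarrow> real)" where
  "GWM N \<Delta> = (\<lambda>i j. real N * \<Delta> i j)"

definition perm_mat :: "(nat \<Rightarrow> nat) \<Rightarrow> (nat \<Rightarrow> nat \<Rightarrow> real) \<Rightarrow> (nat \<Rightarrow> nat \<Rightarrow> real)" where
  "perm_mat \<pi> A = (\<lambda>i j. A (\<pi> i) (\<pi> j))"

definition induced_graphon :: "nat \<Rightarrow> (nat \<Rightarrow> nat \<Rightarrow> real) \<Rightarrow> (real \<Rightarrow> real \<Rightarrow> real)" where
  "induced_graphon N A = (\<lambda>u v. \<Sum>i\<in>{1..N}. \<Sum>j\<in>{1..N}.
      A i j * indicator {(real i - 1) / real N ..< real i / real N} u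
            * indicator {(real j - 1) / real N ..< real j / real N} v)"

text \<open>G_n -> L: operator norm of P T_{W_{pi_n(A_n)}} P - L P tends to 0 for every lam > 0.\<close>
definition graphs_converge_U :: "(nat \<Rightarrow> nat) \<Rightarrow> (nat \<Rightarrow> nat \<Rightarrow> nat \<Rightarrow> real) \<Rightarrow>
    (real \<Rightarrow> real) set \<Rightarrow> ((real \<Rightarrow> real) \<Rightarrow> (real \<Rightarrow> real)) \<Rightarrow> bool" where
  "graphs_converge_U N \<Delta> D L \<longleftrightarrow>
     (\<exists>\<pi>. (\<forall>n. \<pi> n permutes {1..N n}) \<and>
       (\<forall>lam>0. \<forall>e>0. \<forall>\<^sub>F n in sequentially. \<forall>f. sq_int f \<longrightarrow>
          l2_norm (\<lambda>x. spec_proj D L lam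
                         (T_op (induced_graphon (N n) (perm_mat (\<pi> n) (GWM (N n) (\<Delta> n))))
                               (spec_proj D L lam f)) x
                       - L (spec_proj D L lam f) x) \<le> e * l2_norm f))"

end

theory Submission
  imports Defs
begin

(* Let P_lam be the spectral projections and W_lam graphons with L P_lam = T_(W_lam).
   L maps the Paley-Wiener space PW(lam) into itself (it is the closed span of eigenvectors and
   L P_lam is bounded), and P_mu fixes PW(lam) for lam <= mu; hence P_lam T_(W_mu) P_lam = L P_lam.
   So it suffices to approximate W_(n+1) in operator norm within 1/(n+1) by a step graphon, i.e. by
   the graphon induced by a symmetric matrix, and take the graphs with GSO A_n / N_n and identity
   permutations. The operator norm is bounded by the Hilbert-Schmidt (L^2) norm of the kernel, and
   a bounded symmetric Borel kernel is approximated in L^2 by quantising its values and replacing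
   each level set by the union of the grid cells meeting a compact subset of it; by regularity of
   Lebesgue measure such a union lies, for fine grids, inside an open superset of small excess
   measure. *)

section \<open>Square-integrable functions on [0,1]\<close>

abbreviation leb01 :: "real measure" where
  "leb01 \<equiv> lebesgue_on {0..1}"

lemma finite_measure_leb01: "finite_measure leb01"
  by (rule finite_measure_lebesgue_on) simp

lemma measure_leb01_space: "measure leb01 {0..1} = 1"
  by (simp add: measure_restrict_space)

lemma borel_measurable_lebesgue_on_AE_cong:
  fixes f g :: "real \<Rightarrow> real"
  assumes S: "S \<in> sets lebesgue"
    and "f \<in> borel_measurable (lebesgue_on S)" "AE x in lebesgue_on S. f x = g x"
  shows "g \<in> borel_measurable (lebesgue_on S)"
proof -
  have s: "S \<inter> space lebesgue \<in> sets lebesgue" using S by simp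
  have "(\<lambda>x. indicator S x *\<^sub>R f x) \<in> borel_measurable lebesgue"
    using assms(2) borel_measurable_restrict_space_iff[OF s, of f] by simp
  moreover have "AE x in lebesgue. indicator S x *\<^sub>R f x = indicator S x *\<^sub>R g x"
    using assms(3) AE_restrict_space_iff[OF s] by (auto elim!: eventually_mono simp: indicator_def)
  ultimately have "(\<lambda>x. indicator S x *\<^sub>R g x) \<in> borel_measurable lebesgue"
    by (rule borel_measurable_AE)
  then show ?thesis using borel_measurable_restrict_space_iff[OF s, of g] by simp
qed

lemma sq_int_measurable: "sq_int f \<Longrightarrow> f \<in> borel_measurable leb01"
  by (simp add: sq_int_def)

lemma sq_int_integrable_square: "sq_int f \<Longrightarrow> integrable leb01 (\<lambda>x. (f x)\<^sup>2)"
  by (simp add: sq_int_def)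

lemma sq_int_integrable: "sq_int f \<Longrightarrow> integrable leb01 f"
  using finite_measure.square_integrable_imp_integrable[OF finite_measure_leb01] by (auto simp: sq_int_def)

lemma sq_int_integrable_mult:
  assumes "sq_int f" "sq_int g"
  shows "integrable leb01 (\<lambda>x. f x * g x)"
proof (rule Bochner_Integration.integrable_bound)
  show "integrable leb01 (\<lambda>x. (f x)\<^sup>2 + (g x)\<^sup>2)"
    using assms by (simp add: sq_int_def)
  show "(\<lambda>x. f x * g x) \<in> borel_measurable leb01"
    using assms by (auto simp: sq_int_def intro!: borel_measurable_times)
  show "AE x in leb01. norm (f x * g x) \<le> norm ((f x)\<^sup>2 + (g x)\<^sup>2)"
  proof (rule AE_I2)
    fix x
    have "0 \<le> (\<bar>f x\<bar> - \<bar>g x\<bar>)\<^sup>2" by simp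
    then have "2 * (\<bar>f x\<bar> * \<bar>g x\<bar>) \<le> (f x)\<^sup>2 + (g x)\<^sup>2"
      by (simp add: power2_eq_square algebra_simps)
    moreover have "0 \<le> \<bar>f x\<bar> * \<bar>g x\<bar>" by simp
    ultimately have "\<bar>f x\<bar> * \<bar>g x\<bar> \<le> (f x)\<^sup>2 + (g x)\<^sup>2" by linarith
    then show "norm (f x * g x) \<le> norm ((f x)\<^sup>2 + (g x)\<^sup>2)"
      by (simp add: abs_mult)
  qed
qed

lemma sq_int_lincomb:
  assumes "sq_int f" "sq_int g"
  shows "sq_int (\<lambda>x. a * f x + b * g x)"
  unfolding sq_int_def
proof
  show "(\<lambda>x. a * f x + b * g x) \<in> borel_measurable leb01"
    using assms by (auto simp: sq_int_def intro!: borel_measurable_times borel_measurable_add)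
  have "integrable leb01 (\<lambda>x. a\<^sup>2 * (f x)\<^sup>2 + 2 * a * b * (f x * g x) + b\<^sup>2 * (g x)\<^sup>2)"
    using assms sq_int_integrable_mult[OF assms] by (simp add: sq_int_def)
  moreover have "(\<lambda>x. a\<^sup>2 * (f x)\<^sup>2 + 2 * a * b * (f x * g x) + b\<^sup>2 * (g x)\<^sup>2) = (\<lambda>x. (a * f x + b * g x)\<^sup>2)"
    by (rule ext) (simp add: power2_eq_square algebra_simps)
  ultimately show "integrable leb01 (\<lambda>x. (a * f x + b * g x)\<^sup>2)"
    by simp
qed

lemma sq_int_add: "sq_int f \<Longrightarrow> sq_int g \<Longrightarrow> sq_int (\<lambda>x. f x + g x)"
  using sq_int_lincomb[of f g 1 1] by simp

lemma sq_int_diff: "sq_int f \<Longrightarrow> sq_int g \<Longrightarrow> sq_int (\<lambda>x. f x - g x)"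
  using sq_int_lincomb[of f g 1 "-1"] by simp

lemma sq_int_cmult: "sq_int f \<Longrightarrow> sq_int (\<lambda>x. a * f x)"
  using sq_int_lincomb[of f f a 0] by simp

lemma sq_int_bounded:
  assumes "f \<in> borel_measurable leb01" "\<And>x. x \<in> {0..1} \<Longrightarrow> \<bar>f x\<bar> \<le> C"
  shows "sq_int f"
  unfolding sq_int_def
proof
  show "f \<in> borel_measurable leb01" by fact
  show "integrable leb01 (\<lambda>x. (f x)\<^sup>2)"
  proof (rule Bochner_Integration.integrable_bound)
    show "integrable leb01 (\<lambda>x. C\<^sup>2)"
      using finite_measure.integrable_const[OF finite_measure_leb01] by simp
    show "(\<lambda>x. (f x)\<^sup>2) \<in> borel_measurable leb01" using assms by simp
    show "AE x in leb01. norm ((f x)\<^sup>2) \<le> norm (C\<^sup>2)"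
    proof (rule AE_I2)
      fix x assume "x \<in> space leb01"
      then have "\<bar>f x\<bar> \<le> C" using assms by simp
      then have "\<bar>f x\<bar>^2 \<le> C^2"
        by (intro power_mono) auto
      then show "norm ((f x)\<^sup>2) \<le> norm (C\<^sup>2)"
        by simp
    qed
  qed
qed

lemma sq_int_zero: "sq_int (\<lambda>x. 0)"
  by (rule sq_int_bounded[where C=0]) auto

lemma sq_int_ae_eq:
  assumes "sq_int f" "ae_eq f g"
  shows "sq_int g"
  unfolding sq_int_def
proof
  have m: "g \<in> borel_measurable leb01"
    using borel_measurable_lebesgue_on_AE_cong[of "{0..1}" f g] assms by (simp add: sq_int_def ae_eq_def)
  then show "g \<in> borel_measurable leb01" .
  show "integrable leb01 (\<lambda>x. (g x)\<^sup>2)"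
  proof -
    have "AE x in leb01. (f x)\<^sup>2 = (g x)\<^sup>2"
      using assms(2) by (auto simp: ae_eq_def elim!: eventually_mono)
    moreover have "(\<lambda>x. (f x)\<^sup>2) \<in> borel_measurable leb01" "(\<lambda>x. (g x)\<^sup>2) \<in> borel_measurable leb01"
      using m assms(1) by (auto simp: sq_int_def)
    ultimately show ?thesis
      using sq_int_integrable_square[OF assms(1)] integrable_cong_AE[of "\<lambda>x. (f x)\<^sup>2" leb01 "\<lambda>x. (g x)\<^sup>2"] by simp
  qed
qed

lemma l2_inner_commute: "l2_inner f g = l2_inner g f"
  by (simp add: l2_inner_def mult.commute)

lemma l2_inner_lin_left:
  assumes "sq_int f" "sq_int g" "sq_int h"
  shows "l2_inner (\<lambda>x. a * f x + b * g x) h = a * l2_inner f h + b * l2_inner g h"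
proof -
  have "l2_inner (\<lambda>x. a * f x + b * g x) h = (LINT x|leb01. a * (f x * h x) + b * (g x * h x))"
    unfolding l2_inner_def by (simp add: algebra_simps)
  also have "\<dots> = a * l2_inner f h + b * l2_inner g h"
    unfolding l2_inner_def using sq_int_integrable_mult[OF assms(1,3)] sq_int_integrable_mult[OF assms(2,3)] by simp
  finally show ?thesis .
qed

lemma l2_inner_lin_right:
  assumes "sq_int f" "sq_int g" "sq_int h"
  shows "l2_inner h (\<lambda>x. a * f x + b * g x) = a * l2_inner h f + b * l2_inner h g"
  using l2_inner_lin_left[OF assms] by (simp add: l2_inner_commute)

lemma l2_inner_diff_left:
  assumes "sq_int f" "sq_int g" "sq_int h"
  shows "l2_inner (\<lambda>x. f x - g x) h = l2_inner f h - l2_inner g h"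
  using l2_inner_lin_left[OF assms, of 1 "-1"] by simp

lemma l2_inner_diff_right:
  assumes "sq_int f" "sq_int g" "sq_int h"
  shows "l2_inner h (\<lambda>x. f x - g x) = l2_inner h f - l2_inner h g"
  using l2_inner_lin_right[OF assms, of 1 "-1"] by simp

lemma l2_inner_add_left:
  assumes "sq_int f" "sq_int g" "sq_int h"
  shows "l2_inner (\<lambda>x. f x + g x) h = l2_inner f h + l2_inner g h"
  using l2_inner_lin_left[OF assms, of 1 1] by simp

lemma l2_inner_add_right:
  assumes "sq_int f" "sq_int g" "sq_int h"
  shows "l2_inner h (\<lambda>x. f x + g x) = l2_inner h f + l2_inner h g"
  using l2_inner_lin_right[OF assms, of 1 1] by simp

lemma l2_inner_cmult_left:
  "l2_inner (\<lambda>x. a * f x) h = a * l2_inner f h"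
  unfolding l2_inner_def by (simp add: mult.assoc)

lemma l2_inner_cmult_right:
  "l2_inner h (\<lambda>x. a * f x) = a * l2_inner h f"
  using l2_inner_cmult_left[of a f h] by (simp add: l2_inner_commute)

lemma l2_inner_self_nonneg: "0 \<le> l2_inner f f"
  unfolding l2_inner_def by (intro integral_nonneg_AE AE_I2) simp

lemma l2_norm_nonneg: "0 \<le> l2_norm f"
  using l2_inner_self_nonneg[of f] by (simp add: l2_norm_def)

lemma l2_norm_sq: "(l2_norm f)\<^sup>2 = l2_inner f f"
  by (simp add: l2_norm_def l2_inner_self_nonneg)

lemma l2_inner_ae:
  assumes "sq_int f" "sq_int g" "ae_eq f f'" "ae_eq g g'"
  shows "l2_inner f g = l2_inner f' g'"
proof -
  have "sq_int f'" "sq_int g'" using sq_int_ae_eq assms by blast+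
  then show ?thesis
    unfolding l2_inner_def
    using assms by (intro integral_cong_AE)
      (auto simp: ae_eq_def sq_int_def elim!: eventually_mono[OF eventually_conj] intro!: borel_measurable_times)
qed

lemma l2_norm_ae:
  assumes "sq_int f" "ae_eq f f'"
  shows "l2_norm f = l2_norm f'"
  using l2_inner_ae[OF assms(1,1,2,2)] by (simp add: l2_norm_def)

lemma ae_eq_refl: "ae_eq f f"
  by (simp add: ae_eq_def)

lemma ae_eq_sym: "ae_eq f g \<Longrightarrow> ae_eq g f"
  by (auto simp: ae_eq_def elim!: eventually_mono)

lemma ae_eq_trans: "ae_eq f g \<Longrightarrow> ae_eq g h \<Longrightarrow> ae_eq f h"
  unfolding ae_eq_def by (auto elim: eventually_elim2)

lemma l2_inner_self_eq_0_imp_ae_zero: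
  assumes "sq_int f" "l2_inner f f = 0"
  shows "ae_eq f (\<lambda>x. 0)"
proof -
  have "AE x in leb01. (f x * f x) = 0"
    using assms integral_nonneg_eq_0_iff_AE[OF sq_int_integrable_mult[OF assms(1,1)]]
    by (simp add: l2_inner_def)
  then show ?thesis by (simp add: ae_eq_def)
qed

lemma l2_norm_eq_0_imp_ae_zero:
  assumes "sq_int f" "l2_norm f = 0"
  shows "ae_eq f (\<lambda>x. 0)"
  using l2_inner_self_eq_0_imp_ae_zero[OF assms(1)] assms(2) l2_norm_sq[of f] by simp

lemma l2_inner_ae_zero_left:
  assumes "ae_eq f (\<lambda>x. 0)" "sq_int f" "sq_int g"
  shows "l2_inner f g = 0"
  using l2_inner_ae[OF assms(2,3) assms(1) ae_eq_refl] by (simp add: l2_inner_def)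

lemma l2_Cauchy_Schwarz:
  assumes "sq_int f" "sq_int g"
  shows "\<bar>l2_inner f g\<bar> \<le> l2_norm f * l2_norm g"
proof (cases "l2_inner g g = 0")
  case True
  then have "ae_eq g (\<lambda>x. 0)" using l2_inner_self_eq_0_imp_ae_zero assms by blast
  then have "l2_inner g f = 0" using l2_inner_ae_zero_left assms by blast
  then show ?thesis by (simp add: l2_inner_commute l2_norm_nonneg)
next
  case False
  then have gp: "l2_inner g g > 0" using l2_inner_self_nonneg[of g] by simp
  define t where "t = l2_inner f g / l2_inner g g"
  have "0 \<le> l2_inner (\<lambda>x. f x - t * g x) (\<lambda>x. f x - t * g x)"
    by (rule l2_inner_self_nonneg)
  also have "\<dots> = l2_inner f f - 2 * t * l2_inner f g + t\<^sup>2 * l2_inner g g"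
  proof -
    have s: "sq_int (\<lambda>x. t * g x)" using sq_int_cmult assms by blast
    have "l2_inner (\<lambda>x. f x - t * g x) (\<lambda>x. f x - t * g x)
       = l2_inner f (\<lambda>x. f x - t * g x) - l2_inner (\<lambda>x. t * g x) (\<lambda>x. f x - t * g x)"
      using l2_inner_diff_left[OF assms(1) s sq_int_diff[OF assms(1) s]] .
    also have "\<dots> = (l2_inner f f - t * l2_inner f g) - t * (l2_inner g f - t * l2_inner g g)"
      using l2_inner_diff_right[OF assms(1) s assms(1)] l2_inner_diff_right[OF assms(1) s assms(2)]
      by (simp add: l2_inner_cmult_left l2_inner_cmult_right)
    finally show ?thesis by (simp add: l2_inner_commute[of g f] power2_eq_square algebra_simps)
  qed
  also have "\<dots> = l2_inner f f - (l2_inner f g)\<^sup>2 / l2_inner g g"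
    using gp by (simp add: t_def power2_eq_square field_simps)
  finally have "(l2_inner f g)\<^sup>2 \<le> l2_inner f f * l2_inner g g"
    using gp by (simp add: field_simps)
  then have "(l2_inner f g)\<^sup>2 \<le> (l2_norm f * l2_norm g)\<^sup>2"
    by (simp add: power_mult_distrib l2_norm_sq)
  then show ?thesis
    using l2_norm_nonneg[of f] l2_norm_nonneg[of g] abs_le_square_iff[of "l2_inner f g" "l2_norm f * l2_norm g"]
    by simp
qed

lemma l2_norm_add_le:
  assumes "sq_int f" "sq_int g"
  shows "l2_norm (\<lambda>x. f x + g x) \<le> l2_norm f + l2_norm g"
proof -
  have "(l2_norm (\<lambda>x. f x + g x))\<^sup>2 = l2_inner f f + 2 * l2_inner f g + l2_inner g g"
    using l2_inner_add_left[OF assms sq_int_add[OF assms]] l2_inner_add_right[OF assms assms(1)]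
      l2_inner_add_right[OF assms assms(2)]
    by (simp add: l2_norm_sq l2_inner_commute[of g f])
  also have "\<dots> \<le> (l2_norm f)\<^sup>2 + 2 * (l2_norm f * l2_norm g) + (l2_norm g)\<^sup>2"
    using l2_Cauchy_Schwarz[OF assms] by (simp add: l2_norm_sq)
  also have "\<dots> = (l2_norm f + l2_norm g)\<^sup>2"
    by (simp add: power2_eq_square algebra_simps)
  finally show ?thesis
    using l2_norm_nonneg[of f] l2_norm_nonneg[of g] l2_norm_nonneg[of "\<lambda>x. f x + g x"]
    by (meson add_nonneg_nonneg power2_le_imp_le)
qed

lemma l2_norm_diff_triangle:
  assumes "sq_int f" "sq_int g" "sq_int h"
  shows "l2_norm (\<lambda>x. f x - g x) \<le> l2_norm (\<lambda>x. f x - h x) + l2_norm (\<lambda>x. h x - g x)"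
  using l2_norm_add_le[OF sq_int_diff[OF assms(1,3)] sq_int_diff[OF assms(3,2)]] by simp

lemma l2_norm_cmult: "l2_norm (\<lambda>x. a * f x) = \<bar>a\<bar> * l2_norm f"
proof -
  have "l2_inner (\<lambda>x. a * f x) (\<lambda>x. a * f x) = a\<^sup>2 * l2_inner f f"
    by (simp add: l2_inner_cmult_left l2_inner_cmult_right power2_eq_square)
  then show ?thesis
    by (simp add: l2_norm_def real_sqrt_mult)
qed

lemma l2_norm_minus_commute: "l2_norm (\<lambda>x. f x - g x) = l2_norm (\<lambda>x. g x - f x)"
  using l2_norm_cmult[of "-1" "\<lambda>x. f x - g x"] by simp

lemma sq_int_abs: "sq_int f \<Longrightarrow> sq_int (\<lambda>x. \<bar>f x\<bar>)"
  unfolding sq_int_def by auto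

lemma l2_norm_abs: "l2_norm (\<lambda>x. \<bar>f x\<bar>) = l2_norm f"
  unfolding l2_norm_def l2_inner_def by (simp add: abs_mult_self_eq)

lemma sq_int_const: "sq_int (\<lambda>x. c)"
  by (rule sq_int_bounded[where C="\<bar>c\<bar>"]) auto

lemma l2_norm_one: "l2_norm (\<lambda>x. 1) = 1"
  unfolding l2_norm_def l2_inner_def using measure_leb01_space by simp

lemma l1_norm_le_l2_norm:
  assumes "sq_int f"
  shows "(LINT x|leb01. \<bar>f x\<bar>) \<le> l2_norm f"
proof -
  have "(LINT x|leb01. \<bar>f x\<bar>) = l2_inner (\<lambda>x. \<bar>f x\<bar>) (\<lambda>x. 1)"
    by (simp add: l2_inner_def)
  also have "\<dots> \<le> l2_norm (\<lambda>x. \<bar>f x\<bar>) * l2_norm (\<lambda>x. 1)"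
    using l2_Cauchy_Schwarz[OF sq_int_abs[OF assms] sq_int_const[of 1]] abs_le_D1 by blast
  finally show ?thesis by (simp add: l2_norm_abs l2_norm_one)
qed

lemma nn_integral_square_eq_l2_norm:
  assumes "sq_int f"
  shows "(\<integral>\<^sup>+x. ennreal ((f x)\<^sup>2) \<partial>leb01) = ennreal ((l2_norm f)\<^sup>2)"
proof -
  have "(\<integral>\<^sup>+x. ennreal ((f x)\<^sup>2) \<partial>leb01) = ennreal (LINT x|leb01. (f x)\<^sup>2)"
    using sq_int_integrable_square[OF assms] by (intro nn_integral_eq_integral) auto
  then show ?thesis using l2_norm_sq[of f] by (simp add: l2_inner_def power2_eq_square)
qed

section \<open>Completeness and orthogonal projections\<close>

lemma l2_norm_telescope_le:
  assumes p: "\<And>k. sq_int (p k)" and c: "\<And>k. l2_norm (\<lambda>x. p (Suc k) x - p k x) \<le> c k"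
  shows "l2_norm (\<lambda>x. p (k + i) x - p k x) \<le> (\<Sum>j<i. c (j + k))"
proof (induction i)
  case 0
  then show ?case by (simp add: l2_norm_def l2_inner_def)
next
  case (Suc i)
  have "l2_norm (\<lambda>x. p (k + Suc i) x - p k x)
      = l2_norm (\<lambda>x. (p (Suc (k + i)) x - p (k + i) x) + (p (k + i) x - p k x))"
    by simp
  also have "\<dots> \<le> l2_norm (\<lambda>x. p (Suc (k + i)) x - p (k + i) x) + l2_norm (\<lambda>x. p (k + i) x - p k x)"
    using l2_norm_add_le[OF sq_int_diff[OF p p] sq_int_diff[OF p p]] by blast
  also have "\<dots> \<le> c (i + k) + (\<Sum>j<i. c (j + k))"
    using c[of "k + i"] Suc by (simp add: add.commute)
  finally show ?case by (simp add: add.commute)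
qed

lemma AE_convergent_of_summable_l2_increments:
  assumes p: "\<And>k. sq_int (p k)" and c: "\<And>k. l2_norm (\<lambda>x. p (Suc k) x - p k x) \<le> c k"
    and sc: "summable c"
  shows "AE x in leb01. convergent (\<lambda>m. p m x)"
proof -
  have c0: "0 \<le> c k" for k using c[of k] l2_norm_nonneg order_trans by blast
  have [measurable]: "p k \<in> borel_measurable leb01" for k using p sq_int_measurable by blast
  define d where "d j x = \<bar>p (Suc j) x - p j x\<bar>" for j x
  have dm: "d j \<in> borel_measurable leb01" for j
    unfolding d_def by measurable
  have d1: "(\<integral>\<^sup>+x. ennreal (d j x) \<partial>leb01) \<le> ennreal (c j)" for j
  proof -
    have "(\<integral>\<^sup>+x. ennreal (d j x) \<partial>leb01) = ennreal (LINT x|leb01. d j x)"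
      unfolding d_def using sq_int_integrable[OF sq_int_diff[OF p p]]
      by (intro nn_integral_eq_integral) auto
    also have "\<dots> \<le> ennreal (c j)"
      using l1_norm_le_l2_norm[OF sq_int_diff[OF p p], of "Suc j" j] c[of j] unfolding d_def
      by (intro ennreal_leI) simp
    finally show ?thesis .
  qed
  have "(\<integral>\<^sup>+x. (\<Sum>j. ennreal (d j x)) \<partial>leb01) = (\<Sum>j. \<integral>\<^sup>+x. ennreal (d j x) \<partial>leb01)"
    using dm by (intro nn_integral_suminf) auto
  also have "\<dots> \<le> (\<Sum>j. ennreal (c j))"
    using d1 by (intro suminf_le) auto
  also have "\<dots> = ennreal (\<Sum>j. c j)"
    using c0 sc by (simp add: suminf_ennreal2)
  finally have "(\<integral>\<^sup>+x. (\<Sum>j. ennreal (d j x)) \<partial>leb01) \<noteq> \<infinity>"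
    using ennreal_less_top le_less_trans by (metis infinity_ennreal_def less_irrefl)
  then have "AE x in leb01. (\<Sum>j. ennreal (d j x)) \<noteq> \<infinity>"
    using dm by (intro nn_integral_PInf_AE) auto
  then show ?thesis
  proof (rule eventually_mono)
    fix x assume "(\<Sum>j. ennreal (d j x)) \<noteq> \<infinity>"
    then have "summable (\<lambda>j. d j x)"
      by (intro summable_suminf_not_top) (auto simp: d_def)
    then have "summable (\<lambda>j. p (Suc j) x - p j x)"
      unfolding d_def by (rule summable_rabs_cancel)
    then have "convergent (\<lambda>m. \<Sum>j<m. p (Suc j) x - p j x)"
      using convergent_def summable_LIMSEQ by blast
    then have "convergent (\<lambda>m. p 0 x + (\<Sum>j<m. p (Suc j) x - p j x))"
      by (intro convergent_add convergent_const)
    moreover have "p 0 x + (\<Sum>j<m. p (Suc j) x - p j x) = p m x" for m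
      using sum_lessThan_telescope[of "\<lambda>j. p j x" m] by simp
    ultimately show "convergent (\<lambda>m. p m x)" by simp
  qed
qed

lemma l2_Fatou:
  assumes p: "\<And>m. sq_int (p m)" and q: "q \<in> borel_measurable leb01"
    and lim: "AE x in leb01. (\<lambda>m. p m x) \<longlonglongrightarrow> q x" and bound: "\<And>m. l2_norm (p m) \<le> T"
  shows "sq_int q \<and> l2_norm q \<le> T"
proof -
  have T0: "0 \<le> T" using bound[of 0] l2_norm_nonneg order_trans by blast
  define u where "u m x = ennreal ((p m x)\<^sup>2)" for m x
  have um: "u m \<in> borel_measurable leb01" for m
    unfolding u_def using sq_int_measurable[OF p] by measurable
  have lim_u: "AE x in leb01. liminf (\<lambda>m. u m x) = ennreal ((q x)\<^sup>2)"
    using lim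
  proof (rule eventually_mono)
    fix x assume "(\<lambda>m. p m x) \<longlonglongrightarrow> q x"
    then have "(\<lambda>m. u m x) \<longlonglongrightarrow> ennreal ((q x)\<^sup>2)"
      unfolding u_def by (intro tendsto_ennrealI tendsto_intros)
    then show "liminf (\<lambda>m. u m x) = ennreal ((q x)\<^sup>2)"
      by (intro lim_imp_Liminf) auto
  qed
  have ub: "integral\<^sup>N leb01 (u m) \<le> ennreal (T\<^sup>2)" for m
  proof -
    have "integral\<^sup>N leb01 (u m) = ennreal ((l2_norm (p m))\<^sup>2)"
      unfolding u_def using nn_integral_square_eq_l2_norm[OF p] by simp
    also have "\<dots> \<le> ennreal (T\<^sup>2)"
      using bound[of m] l2_norm_nonneg by (intro ennreal_leI power_mono) auto
    finally show ?thesis .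
  qed
  have "(\<integral>\<^sup>+x. ennreal ((q x)\<^sup>2) \<partial>leb01) = (\<integral>\<^sup>+x. liminf (\<lambda>m. u m x) \<partial>leb01)"
    using lim_u by (intro nn_integral_cong_AE) (auto elim!: eventually_mono)
  also have "\<dots> \<le> liminf (\<lambda>m. integral\<^sup>N leb01 (u m))"
    using um by (rule nn_integral_liminf)
  also have "\<dots> \<le> limsup (\<lambda>m. integral\<^sup>N leb01 (u m))"
    by (rule Liminf_le_Limsup) simp
  also have "\<dots> \<le> ennreal (T\<^sup>2)"
    using ub by (intro Limsup_bounded) simp
  finally have nnb: "(\<integral>\<^sup>+x. ennreal ((q x)\<^sup>2) \<partial>leb01) \<le> ennreal (T\<^sup>2)" .
  then have "(\<integral>\<^sup>+x. ennreal ((q x)\<^sup>2) \<partial>leb01) < top"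
    using ennreal_less_top by (rule le_less_trans)
  then obtain r where "(\<integral>\<^sup>+x. ennreal ((q x)\<^sup>2) \<partial>leb01) = ennreal r" "0 \<le> r"
    unfolding less_top_ennreal by blast
  then have "integrable leb01 (\<lambda>x. (q x)\<^sup>2)"
    using q by (intro integrableI_nn_integral_finite) auto
  then have sqi: "sq_int q"
    unfolding sq_int_def using q by simp
  have "ennreal ((l2_norm q)\<^sup>2) \<le> ennreal (T\<^sup>2)"
    using nn_integral_square_eq_l2_norm[OF sqi] nnb by simp
  then have "(l2_norm q)\<^sup>2 \<le> T\<^sup>2"
    using T0 by (simp add: ennreal_le_iff)
  then show ?thesis
    using sqi T0 l2_norm_nonneg power2_le_imp_le by blast
qed

lemma l2_Riesz_Fischer:
  assumes p: "\<And>k. sq_int (p k)" and c: "\<And>k. l2_norm (\<lambda>x. p (Suc k) x - p k x) \<le> c k"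
    and sc: "summable c"
  shows "\<exists>q. sq_int q \<and> (\<forall>k. l2_norm (\<lambda>x. q x - p k x) \<le> (\<Sum>j. c (j + k)))"
proof -
  have c0: "0 \<le> c k" for k using c[of k] l2_norm_nonneg order_trans by blast
  have [measurable]: "p k \<in> borel_measurable leb01" for k using p sq_int_measurable by blast
  define q where "q x = lim (\<lambda>m. p m x)" for x
  have [measurable]: "q \<in> borel_measurable leb01"
    unfolding q_def by measurable
  have conv: "AE x in leb01. (\<lambda>m. p m x) \<longlonglongrightarrow> q x"
    using AE_convergent_of_summable_l2_increments[OF p c sc]
    by (rule eventually_mono) (simp add: q_def convergent_LIMSEQ_iff)
  have tail: "sq_int (\<lambda>x. q x - p k x) \<and> l2_norm (\<lambda>x. q x - p k x) \<le> (\<Sum>j. c (j + k))" for k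
  proof (rule l2_Fatou[where p = "\<lambda>m x. p (m + k) x - p k x"])
    show "sq_int (\<lambda>x. p (m + k) x - p k x)" for m using sq_int_diff[OF p p] .
    show "(\<lambda>x. q x - p k x) \<in> borel_measurable leb01" by measurable
    show "AE x in leb01. (\<lambda>m. p (m + k) x - p k x) \<longlonglongrightarrow> q x - p k x"
      using conv
    proof (rule eventually_mono)
      fix x assume "(\<lambda>m. p m x) \<longlonglongrightarrow> q x"
      then have "(\<lambda>m. p (m + k) x) \<longlonglongrightarrow> q x" by (rule LIMSEQ_ignore_initial_segment)
      then show "(\<lambda>m. p (m + k) x - p k x) \<longlonglongrightarrow> q x - p k x" by (rule tendsto_diff) simp
    qed
    have sck: "summable (\<lambda>j. c (j + k))" using sc by (simp add: summable_iff_shift)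
    show "l2_norm (\<lambda>x. p (m + k) x - p k x) \<le> (\<Sum>j. c (j + k))" for m
      using l2_norm_telescope_le[of p c k m, OF p c] sum_le_suminf[OF sck, of "{..<m}"] c0
      by (fastforce simp: add.commute[of m k])
  qed
  have "sq_int (\<lambda>x. (q x - p 0 x) + p 0 x)"
    using tail[of 0] p[of 0] by (intro sq_int_add) auto
  then have "sq_int q" by simp
  with tail show ?thesis by blast
qed

lemma l2_norm_diff_sq:
  assumes "sq_int a" "sq_int b"
  shows "(l2_norm (\<lambda>x. a x - b x))\<^sup>2 = (l2_norm a)\<^sup>2 - 2 * l2_inner a b + (l2_norm b)\<^sup>2"
proof -
  have "l2_inner (\<lambda>x. a x - b x) (\<lambda>x. a x - b x) = l2_inner a (\<lambda>x. a x - b x) - l2_inner b (\<lambda>x. a x - b x)"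
    using l2_inner_diff_left[OF assms sq_int_diff[OF assms]] .
  also have "\<dots> = (l2_inner a a - l2_inner a b) - (l2_inner b a - l2_inner b b)"
    using l2_inner_diff_right[OF assms assms(1)] l2_inner_diff_right[OF assms assms(2)] by simp
  finally show ?thesis by (simp add: l2_norm_sq l2_inner_commute[of b a])
qed

lemma l2_norm_add_sq:
  assumes "sq_int a" "sq_int b"
  shows "(l2_norm (\<lambda>x. a x + b x))\<^sup>2 = (l2_norm a)\<^sup>2 + 2 * l2_inner a b + (l2_norm b)\<^sup>2"
proof -
  have "l2_inner (\<lambda>x. a x + b x) (\<lambda>x. a x + b x) = l2_inner a (\<lambda>x. a x + b x) + l2_inner b (\<lambda>x. a x + b x)"
    using l2_inner_add_left[OF assms sq_int_add[OF assms]] .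
  also have "\<dots> = (l2_inner a a + l2_inner a b) + (l2_inner b a + l2_inner b b)"
    using l2_inner_add_right[OF assms assms(1)] l2_inner_add_right[OF assms assms(2)] by simp
  finally show ?thesis by (simp add: l2_norm_sq l2_inner_commute[of b a])
qed

lemma l2_parallelogram:
  assumes "sq_int a" "sq_int b"
  shows "(l2_norm (\<lambda>x. a x - b x))\<^sup>2 = 2 * (l2_norm a)\<^sup>2 + 2 * (l2_norm b)\<^sup>2 - (l2_norm (\<lambda>x. a x + b x))\<^sup>2"
  using l2_norm_diff_sq[OF assms] l2_norm_add_sq[OF assms] by simp

definition closed_l2_subspace :: "(real \<Rightarrow> real) set \<Rightarrow> bool" where
  "closed_l2_subspace S \<longleftrightarrow> S \<subseteq> {f. sq_int f} \<and> (\<lambda>x. 0) \<in> S \<and>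
     (\<forall>f\<in>S. \<forall>g\<in>S. \<forall>a b. (\<lambda>x. a * f x + b * g x) \<in> S) \<and>
     (\<forall>f. sq_int f \<and> (\<forall>e>0. \<exists>s\<in>S. l2_norm (\<lambda>x. f x - s x) < e) \<longrightarrow> f \<in> S)"

lemma l2_limit_of_geometric_Cauchy:
  assumes p: "\<And>k. sq_int (p k)" and step: "\<And>k. l2_norm (\<lambda>x. p (Suc k) x - p k x) \<le> 2 * (1/2)^k"
  obtains q where "sq_int q" "\<And>k. l2_norm (\<lambda>x. q x - p k x) \<le> 4 * (1/2)^k"
proof -
  define c where "c k = 2 * (1/2::real)^k" for k
  have sc: "summable c" unfolding c_def by (intro summable_mult summable_geometric) simp
  have csum: "(\<Sum>j. c (j + k)) = 4 * (1/2)^k" for k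
  proof -
    have "(\<Sum>j. c (j + k)) = (\<Sum>j. (2 * (1/2)^k) * (1/2::real)^j)"
      unfolding c_def by (simp add: power_add algebra_simps)
    also have "\<dots> = (2 * (1/2)^k) * (\<Sum>j. (1/2::real)^j)"
      by (intro suminf_mult summable_geometric) simp
    also have "\<dots> = 4 * (1/2)^k" using suminf_geometric[of "1/2::real"] by simp
    finally show ?thesis .
  qed
  show ?thesis
    using l2_Riesz_Fischer[of p c, OF p step[unfolded c_def[symmetric]] sc] that
    unfolding csum by blast
qed

lemma l2_norm_diff_le_midpoint:
  assumes f: "sq_int f" and s: "sq_int s" and t: "sq_int t"
    and d: "d \<le> (l2_norm (\<lambda>x. f x - ((1/2) * s x + (1/2) * t x)))\<^sup>2"
  shows "(l2_norm (\<lambda>x. s x - t x))\<^sup>2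
    \<le> 2 * ((l2_norm (\<lambda>x. f x - s x))\<^sup>2 - d) + 2 * ((l2_norm (\<lambda>x. f x - t x))\<^sup>2 - d)"
proof -
  have a: "sq_int (\<lambda>x. f x - s x)" "sq_int (\<lambda>x. f x - t x)" using f s t sq_int_diff by auto
  have "(l2_norm (\<lambda>x. s x - t x))\<^sup>2 = (l2_norm (\<lambda>x. (f x - t x) - (f x - s x)))\<^sup>2"
    by simp
  also have "\<dots> = 2 * (l2_norm (\<lambda>x. f x - t x))\<^sup>2 + 2 * (l2_norm (\<lambda>x. f x - s x))\<^sup>2
      - (l2_norm (\<lambda>x. (f x - t x) + (f x - s x)))\<^sup>2"
    by (rule l2_parallelogram[OF a(2) a(1)])
  also have "(l2_norm (\<lambda>x. (f x - t x) + (f x - s x)))\<^sup>2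
      = 4 * (l2_norm (\<lambda>x. f x - ((1/2) * s x + (1/2) * t x)))\<^sup>2"
  proof -
    have eq: "(\<lambda>x. (f x - t x) + (f x - s x)) = (\<lambda>x. 2 * (f x - ((1/2) * s x + (1/2) * t x)))"
      by (auto simp: algebra_simps)
    show ?thesis
      unfolding eq l2_norm_cmult[of 2, simplified] by (simp add: power_mult_distrib)
  qed
  finally show ?thesis using d by simp
qed

lemma closed_l2_subspace_nearest_point:
  assumes S: "closed_l2_subspace S" and f: "sq_int f"
  shows "\<exists>q\<in>S. \<forall>s\<in>S. (l2_norm (\<lambda>x. f x - q x))\<^sup>2 \<le> (l2_norm (\<lambda>x. f x - s x))\<^sup>2"
proof -
  have Ssq: "s \<in> S \<Longrightarrow> sq_int s" for s using S by (auto simp: closed_l2_subspace_def)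
  have Slin: "s \<in> S \<Longrightarrow> t \<in> S \<Longrightarrow> (\<lambda>x. a * s x + b * t x) \<in> S" for s t a b
    using S by (auto simp: closed_l2_subspace_def)
  have S0: "(\<lambda>x. 0) \<in> S" using S by (auto simp: closed_l2_subspace_def)
  have Scl: "sq_int g \<Longrightarrow> (\<And>e. e > 0 \<Longrightarrow> \<exists>s\<in>S. l2_norm (\<lambda>x. g x - s x) < e) \<Longrightarrow> g \<in> S" for g
    using S unfolding closed_l2_subspace_def by blast
  define Q where "Q = (\<lambda>s. (l2_norm (\<lambda>x. f x - s x))\<^sup>2) ` S"
  define d where "d = Inf Q"
  have Qne: "Q \<noteq> {}" using S0 Q_def by auto
  have Qbdd: "bdd_below Q" unfolding Q_def by (intro bdd_belowI[where m=0]) auto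
  have dle: "s \<in> S \<Longrightarrow> d \<le> (l2_norm (\<lambda>x. f x - s x))\<^sup>2" for s
    unfolding d_def Q_def using Qbdd Q_def by (intro cInf_lower) auto
  have d0: "0 \<le> d" unfolding d_def using Qne by (intro cInf_greatest) (auto simp: Q_def)
  have "\<exists>s. s \<in> S \<and> (l2_norm (\<lambda>x. f x - s x))\<^sup>2 < d + (1/4)^k" for k
  proof -
    have "d < d + (1/4)^k" by simp
    then obtain y where "y \<in> Q" "y < d + (1/4)^k" unfolding d_def using cInf_lessD[OF Qne] by blast
    then show ?thesis unfolding Q_def by auto
  qed
  then obtain p where pS: "\<And>k. p k \<in> S" and pd: "\<And>k. (l2_norm (\<lambda>x. f x - p k x))\<^sup>2 < d + (1/4)^k"
    by metis
  have psq: "sq_int (p k)" for k using Ssq pS by blast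
  have "l2_norm (\<lambda>x. p (Suc k) x - p k x) \<le> 2 * (1/2)^k" for k
  proof -
    have "d \<le> (l2_norm (\<lambda>x. f x - ((1/2) * p (Suc k) x + (1/2) * p k x)))\<^sup>2"
      using dle Slin pS by blast
    then have "(l2_norm (\<lambda>x. p (Suc k) x - p k x))\<^sup>2 \<le> 2 * (1/4)^(Suc k) + 2 * (1/4)^k"
      using l2_norm_diff_le_midpoint[OF f psq psq] pd[of k] pd[of "Suc k"] by fastforce
    also have "\<dots> \<le> (2 * (1/2)^k)\<^sup>2"
      by (simp add: power_mult_distrib[symmetric] power2_eq_square)
    finally show ?thesis
      using power2_le_imp_le[of _ "2 * (1/2::real)^k"] by simp
  qed
  then obtain q where q: "sq_int q" and qb: "\<And>k. l2_norm (\<lambda>x. q x - p k x) \<le> 4 * (1/2)^k"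
    using l2_limit_of_geometric_Cauchy[of p, OF psq] by blast
  have qS: "q \<in> S"
  proof (rule Scl[OF q])
    fix e :: real assume "e > 0"
    obtain k where "(1/2::real)^k < e / 4"
      using real_arch_pow_inv[of "e/4" "1/2"] \<open>e > 0\<close> by auto
    then have "l2_norm (\<lambda>x. q x - p k x) < e" using qb[of k] by simp
    then show "\<exists>s\<in>S. l2_norm (\<lambda>x. q x - s x) < e" using pS by blast
  qed
  have ub: "l2_norm (\<lambda>x. f x - q x) \<le> sqrt (d + (1/4)^k) + 4 * (1/2)^k" for k
  proof -
    have "l2_norm (\<lambda>x. f x - q x) \<le> l2_norm (\<lambda>x. f x - p k x) + l2_norm (\<lambda>x. p k x - q x)"
      by (rule l2_norm_diff_triangle[OF f q psq])
    also have "l2_norm (\<lambda>x. f x - p k x) \<le> sqrt (d + (1/4)^k)"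
      using pd[of k] l2_norm_nonneg by (simp add: less_imp_le real_le_rsqrt)
    also have "l2_norm (\<lambda>x. p k x - q x) \<le> 4 * (1/2)^k"
      using qb[of k] l2_norm_minus_commute[of "p k" q] by simp
    finally show ?thesis by simp
  qed
  have "(\<lambda>k. sqrt (d + (1/4)^k) + 4 * (1/2::real)^k) \<longlonglongrightarrow> sqrt (d + 0) + 4 * 0"
    by (intro tendsto_intros LIMSEQ_power_zero) auto
  then have "l2_norm (\<lambda>x. f x - q x) \<le> sqrt d"
    using ub by (intro LIMSEQ_le_const[of _ "sqrt d"]) (auto intro: exI[of _ 0])
  then have "(l2_norm (\<lambda>x. f x - q x))\<^sup>2 \<le> d"
    using d0 l2_norm_nonneg by (metis power_mono real_sqrt_pow2)
  then show ?thesis using qS dle order_trans by blast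
qed

lemma l2_nearest_point_orthogonal:
  assumes f: "sq_int f" and q: "sq_int q" and v: "sq_int v"
    and min: "\<And>t. (l2_norm (\<lambda>x. f x - q x))\<^sup>2 \<le> (l2_norm (\<lambda>x. f x - (q x + t * v x)))\<^sup>2"
  shows "l2_inner (\<lambda>x. f x - q x) v = 0"
proof (rule ccontr)
  define r where "r = l2_inner (\<lambda>x. f x - q x) v"
  define n where "n = (l2_norm v)\<^sup>2"
  assume "l2_inner (\<lambda>x. f x - q x) v \<noteq> 0"
  then have rr: "0 < r * r" unfolding r_def using not_real_square_gt_zero by blast
  have n0: "0 \<le> n" by (simp add: n_def)
  define e where "e = 1 / (n + 1)"
  have e0: "0 < e" and en: "e * n < 1" using n0 by (simp_all add: e_def)
  have a: "sq_int (\<lambda>x. f x - q x)" using f q sq_int_diff by blast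
  have "(\<lambda>x. f x - (q x + (e * r) * v x)) = (\<lambda>x. (f x - q x) - (e * r) * v x)"
    by (auto simp: algebra_simps)
  then have "(l2_norm (\<lambda>x. f x - (q x + (e * r) * v x)))\<^sup>2
      = (l2_norm (\<lambda>x. f x - q x))\<^sup>2 - 2 * (e * r) * r + (e * r)\<^sup>2 * n"
    using l2_norm_diff_sq[OF a sq_int_cmult[OF v, of "e * r"]]
    by (simp add: l2_inner_cmult_right l2_norm_cmult r_def n_def power_mult_distrib)
  then have "(2 * e) * (r * r) \<le> (e * e * n) * (r * r)"
    using min[of "e * r"] by (simp add: power2_eq_square algebra_simps)
  then have "2 * e \<le> e * e * n" using rr mult_le_cancel_right_pos by blast
  then have "2 \<le> e * n" using e0 by (simp add: algebra_simps)
  then show False using en by simp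
qed

lemma closed_l2_subspace_orthogonal_projection:
  assumes S: "closed_l2_subspace S" and f: "sq_int f"
  shows "\<exists>p\<in>S. \<forall>v\<in>S. l2_inner (\<lambda>x. f x - p x) v = 0"
proof -
  obtain q where qS: "q \<in> S"
    and min: "\<And>s. s \<in> S \<Longrightarrow> (l2_norm (\<lambda>x. f x - q x))\<^sup>2 \<le> (l2_norm (\<lambda>x. f x - s x))\<^sup>2"
    using closed_l2_subspace_nearest_point[OF S f] by blast
  have "l2_inner (\<lambda>x. f x - q x) v = 0" if v: "v \<in> S" for v
  proof (rule l2_nearest_point_orthogonal[OF f])
    show "sq_int q" "sq_int v" using S qS v by (auto simp: closed_l2_subspace_def)
    have "(\<lambda>x. 1 * q x + t * v x) \<in> S" for t using S qS v unfolding closed_l2_subspace_def by blast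
    then show "(l2_norm (\<lambda>x. f x - q x))\<^sup>2 \<le> (l2_norm (\<lambda>x. f x - (q x + t * v x)))\<^sup>2" for t
      using min by fastforce
  qed
  then show ?thesis using qS by blast
qed

lemma mem_lin_span: "s \<in> lin_span U \<longleftrightarrow> (\<exists>(k::nat) cs gs. s = (\<lambda>x. \<Sum>i<k. cs i * gs i x) \<and> (\<forall>i<k. gs i \<in> U))"
  unfolding lin_span_def by blast

lemma lin_span_zero: "(\<lambda>x. 0) \<in> lin_span U"
  unfolding lin_span_def by (rule CollectI, rule exI[of _ 0]) auto

lemma lin_span_add_generator:
  assumes "s \<in> lin_span U" "g \<in> U"
  shows "(\<lambda>x. s x + c * g x) \<in> lin_span U"
proof -
  obtain k :: nat and cs gs where s: "s = (\<lambda>x. \<Sum>i<k. cs i * gs i x)" "\<forall>i<k. gs i \<in> U"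
    using assms(1) unfolding mem_lin_span by blast
  define cs' where "cs' = cs(k := c)"
  define gs' where "gs' = gs(k := g)"
  have "(\<lambda>x. s x + c * g x) = (\<lambda>x. \<Sum>i<Suc k. cs' i * gs' i x)"
    unfolding s cs'_def gs'_def by (auto intro!: sum.cong)
  moreover have "\<forall>i<Suc k. gs' i \<in> U" using s assms(2) by (auto simp: gs'_def less_Suc_eq)
  ultimately show ?thesis unfolding lin_span_def by blast
qed

lemma lin_span_cmult:
  assumes "s \<in> lin_span U"
  shows "(\<lambda>x. a * s x) \<in> lin_span U"
proof -
  obtain k :: nat and cs gs where s: "s = (\<lambda>x. \<Sum>i<k. cs i * gs i x)" "\<forall>i<k. gs i \<in> U"
    using assms(1) unfolding mem_lin_span by blast
  have "(\<lambda>x. a * s x) = (\<lambda>x. \<Sum>i<k. (a * cs i) * gs i x)"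
    unfolding s by (auto simp: sum_distrib_left mult.assoc)
  then show ?thesis using s unfolding mem_lin_span
    by (intro exI[of _ k] exI[of _ "\<lambda>i. a * cs i"] exI[of _ gs]) auto
qed

lemma lin_span_add:
  assumes "s \<in> lin_span U" "t \<in> lin_span U"
  shows "(\<lambda>x. s x + t x) \<in> lin_span U"
proof -
  obtain k :: nat and cs gs where t: "t = (\<lambda>x. \<Sum>i<k. cs i * gs i x)" "\<forall>i<k. gs i \<in> U"
    using assms(2) unfolding mem_lin_span by blast
  have "(\<lambda>x. s x + (\<Sum>i<m. cs i * gs i x)) \<in> lin_span U" if "m \<le> k" for m
    using that
  proof (induction m)
    case 0
    then show ?case using assms(1) by simp
  next
    case (Suc m)
    then have "(\<lambda>x. (s x + (\<Sum>i<m. cs i * gs i x)) + cs m * gs m x) \<in> lin_span U"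
      using t(2) by (intro lin_span_add_generator) auto
    then show ?case by (simp add: add.assoc)
  qed
  then show ?thesis unfolding t by simp
qed

lemma lin_span_lincomb:
  assumes "s \<in> lin_span U" "t \<in> lin_span U"
  shows "(\<lambda>x. a * s x + b * t x) \<in> lin_span U"
  using lin_span_add[OF lin_span_cmult[OF assms(1)] lin_span_cmult[OF assms(2)]] .

lemma lin_span_mono: "U \<subseteq> V \<Longrightarrow> lin_span U \<subseteq> lin_span V"
  unfolding lin_span_def by blast

lemma lin_span_induct:
  assumes "s \<in> lin_span U" "P (\<lambda>x. 0)"
    "\<And>s g c. P s \<Longrightarrow> g \<in> U \<Longrightarrow> P (\<lambda>x. s x + c * g x)"
  shows "P s"
proof -
  obtain k :: nat and cs gs where s: "s = (\<lambda>x. \<Sum>i<k. cs i * gs i x)" "\<forall>i<k. gs i \<in> U"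
    using assms(1) unfolding mem_lin_span by blast
  have "P (\<lambda>x. \<Sum>i<m. cs i * gs i x)" if "m \<le> k" for m
    using that
  proof (induction m)
    case 0 then show ?case using assms(2) by simp
  next
    case (Suc m)
    then have "P (\<lambda>x. (\<Sum>i<m. cs i * gs i x) + cs m * gs m x)"
      using s(2) by (intro assms(3)) auto
    then show ?case by simp
  qed
  then show ?thesis using s by simp
qed

lemma lin_span_sq_int: "U \<subseteq> {f. sq_int f} \<Longrightarrow> s \<in> lin_span U \<Longrightarrow> sq_int s"
proof -
  assume U: "U \<subseteq> {f. sq_int f}" and s: "s \<in> lin_span U"
  show "sq_int s"
    using s
  proof (rule lin_span_induct)
    show "sq_int (\<lambda>x. 0)" by (rule sq_int_zero)
    fix s g c assume "sq_int s" "g \<in> U"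
    then show "sq_int (\<lambda>x. s x + c * g x)" using U sq_int_add sq_int_cmult by blast
  qed
qed

lemma l2_closure_lin_span_lincomb:
  assumes U: "U \<subseteq> {f. sq_int f}"
    and f: "f \<in> l2_closure (lin_span U)" and g: "g \<in> l2_closure (lin_span U)"
  shows "(\<lambda>x. a * f x + b * g x) \<in> l2_closure (lin_span U)"
  unfolding l2_closure_def
proof (intro CollectI conjI allI impI)
  have fs: "sq_int f" and gs: "sq_int g" using f g by (auto simp: l2_closure_def)
  show "sq_int (\<lambda>x. a * f x + b * g x)" using sq_int_lincomb[OF fs gs] .
  fix e :: real assume e: "e > 0"
  define e' where "e' = e / (2 * (\<bar>a\<bar> + \<bar>b\<bar> + 1))"
  have e'0: "e' > 0" using e by (simp add: e'_def add_pos_nonneg)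
  obtain s where s: "s \<in> lin_span U" "l2_norm (\<lambda>x. f x - s x) < e'"
    using f e'0 unfolding l2_closure_def by blast
  obtain t where t: "t \<in> lin_span U" "l2_norm (\<lambda>x. g x - t x) < e'"
    using g e'0 unfolding l2_closure_def by blast
  have ss: "sq_int s" "sq_int t" using lin_span_sq_int[OF U] s t by auto
  have "l2_norm (\<lambda>x. (a * f x + b * g x) - (a * s x + b * t x))
      = l2_norm (\<lambda>x. a * (f x - s x) + b * (g x - t x))"
    by (simp add: algebra_simps)
  also have "\<dots> \<le> l2_norm (\<lambda>x. a * (f x - s x)) + l2_norm (\<lambda>x. b * (g x - t x))"
    using l2_norm_add_le[OF sq_int_cmult[OF sq_int_diff[OF fs ss(1)]] sq_int_cmult[OF sq_int_diff[OF gs ss(2)]]] by simp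
  also have "\<dots> = \<bar>a\<bar> * l2_norm (\<lambda>x. f x - s x) + \<bar>b\<bar> * l2_norm (\<lambda>x. g x - t x)"
    by (simp add: l2_norm_cmult)
  also have "\<dots> \<le> \<bar>a\<bar> * e' + \<bar>b\<bar> * e'"
    using s(2) t(2) by (intro add_mono mult_left_mono) auto
  also have "\<dots> < e"
  proof -
    have "(\<bar>a\<bar> + \<bar>b\<bar>) * e' < (\<bar>a\<bar> + \<bar>b\<bar> + 1) * e'" using e'0 by simp
    also have "\<dots> = e / 2" unfolding e'_def by (simp add: field_simps)
    finally show ?thesis using e by (simp add: algebra_simps)
  qed
  finally have "l2_norm (\<lambda>x. (a * f x + b * g x) - (a * s x + b * t x)) < e" .
  then show "\<exists>s'\<in>lin_span U. l2_norm (\<lambda>x. a * f x + b * g x - s' x) < e"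
    using lin_span_lincomb[OF s(1) t(1), of a b] by (intro bexI[of _ "\<lambda>x. a * s x + b * t x"]) auto
qed

lemma l2_closure_closed:
  assumes U: "U \<subseteq> {f. sq_int f}" and f: "sq_int f"
    and approx: "\<And>e. e > 0 \<Longrightarrow> \<exists>s\<in>l2_closure U. l2_norm (\<lambda>x. f x - s x) < e"
  shows "f \<in> l2_closure U"
  unfolding l2_closure_def
proof (intro CollectI conjI allI impI)
  show "sq_int f" by (rule f)
  fix e :: real assume e: "e > 0"
  obtain p where p: "p \<in> l2_closure U" "l2_norm (\<lambda>x. f x - p x) < e/2"
    using approx e half_gt_zero by blast
  obtain s where s: "s \<in> U" "l2_norm (\<lambda>x. p x - s x) < e/2"
    using p(1) e half_gt_zero unfolding l2_closure_def by blast
  have "l2_norm (\<lambda>x. f x - s x) \<le> l2_norm (\<lambda>x. f x - p x) + l2_norm (\<lambda>x. p x - s x)"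
    using l2_norm_diff_triangle[of f s p] f p(1) s(1) U unfolding l2_closure_def by blast
  then show "\<exists>s\<in>U. l2_norm (\<lambda>x. f x - s x) < e"
    using p(2) s by (intro bexI[OF _ s(1)]) linarith
qed

lemma closed_l2_subspace_l2_closure_lin_span:
  assumes U: "U \<subseteq> {f. sq_int f}"
  shows "closed_l2_subspace (l2_closure (lin_span U))"
  unfolding closed_l2_subspace_def
proof (intro conjI ballI allI impI)
  show "l2_closure (lin_span U) \<subseteq> {f. sq_int f}" by (auto simp: l2_closure_def)
  show "(\<lambda>x. 0) \<in> l2_closure (lin_span U)"
    using lin_span_zero[of U] sq_int_zero unfolding l2_closure_def
    by (auto intro!: bexI[of _ "\<lambda>x. 0"] simp: l2_norm_def l2_inner_def)
  show "(\<lambda>x. a * f x + b * g x) \<in> l2_closure (lin_span U)"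
    if "f \<in> l2_closure (lin_span U)" "g \<in> l2_closure (lin_span U)" for f g a b
    using l2_closure_lin_span_lincomb[OF U that] .
  show "f \<in> l2_closure (lin_span U)"
    if "sq_int f \<and> (\<forall>e>0. \<exists>s\<in>l2_closure (lin_span U). l2_norm (\<lambda>x. f x - s x) < e)" for f
    using l2_closure_closed[of "lin_span U" f] lin_span_sq_int[OF U] that by blast
qed

section \<open>Self-adjoint operators and Paley-Wiener spaces\<close>

lemma self_adjoint_op_domain_sq_int: "self_adjoint_op D L \<Longrightarrow> f \<in> D \<Longrightarrow> sq_int f"
  unfolding self_adjoint_op_def by blast

lemma self_adjoint_op_image_sq_int: "self_adjoint_op D L \<Longrightarrow> f \<in> D \<Longrightarrow> sq_int (L f)"
  unfolding self_adjoint_op_def by blast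

lemma self_adjoint_op_domain_lincomb: "self_adjoint_op D L \<Longrightarrow> f \<in> D \<Longrightarrow> g \<in> D \<Longrightarrow> (\<lambda>x. a * f x + b * g x) \<in> D"
  unfolding self_adjoint_op_def by blast

lemma self_adjoint_op_linear: "self_adjoint_op D L \<Longrightarrow> f \<in> D \<Longrightarrow> g \<in> D \<Longrightarrow>
    ae_eq (L (\<lambda>x. a * f x + b * g x)) (\<lambda>x. a * L f x + b * L g x)"
  unfolding self_adjoint_op_def by blast

lemma self_adjoint_op_domain_dense: "self_adjoint_op D L \<Longrightarrow> sq_int f \<Longrightarrow> e > 0 \<Longrightarrow> \<exists>g\<in>D. l2_norm (\<lambda>x. f x - g x) < e"
  unfolding self_adjoint_op_def by blast

lemma self_adjoint_op_symmetric: "self_adjoint_op D L \<Longrightarrow> f \<in> D \<Longrightarrow> g \<in> D \<Longrightarrow> l2_inner (L f) g = l2_inner f (L g)"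
  unfolding self_adjoint_op_def by blast

lemma self_adjoint_op_domain_zero: "self_adjoint_op D L \<Longrightarrow> (\<lambda>x. 0) \<in> D"
proof -
  assume sa: "self_adjoint_op D L"
  obtain g where "g \<in> D" using self_adjoint_op_domain_dense[OF sa sq_int_zero, of 1] by auto
  then have "(\<lambda>x. 0 * g x + 0 * g x) \<in> D" using self_adjoint_op_domain_lincomb[OF sa] by blast
  then show ?thesis by simp
qed

lemma orthogonal_to_dense_domain_imp_ae_zero:
  assumes sa: "self_adjoint_op D L" and u: "sq_int u" and o: "\<And>w. w \<in> D \<Longrightarrow> l2_inner u w = 0"
  shows "ae_eq u (\<lambda>x. 0)"
proof -
  have "l2_norm u \<le> e" if e0: "e > 0" for e
  proof -
    obtain w where w: "w \<in> D" "l2_norm (\<lambda>x. u x - w x) < e" using self_adjoint_op_domain_dense[OF sa u e0] by blast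
    have ws: "sq_int w" using self_adjoint_op_domain_sq_int[OF sa w(1)] .
    have "(l2_norm u)\<^sup>2 = l2_inner u u" by (rule l2_norm_sq)
    also have "\<dots> = l2_inner u (\<lambda>x. u x - w x) + l2_inner u w"
      using l2_inner_diff_right[OF u ws u] by simp
    also have "\<dots> = l2_inner u (\<lambda>x. u x - w x)" using o[OF w(1)] by simp
    also have "\<dots> \<le> l2_norm u * l2_norm (\<lambda>x. u x - w x)"
      using l2_Cauchy_Schwarz[OF u sq_int_diff[OF u ws]] by simp
    also have "\<dots> \<le> l2_norm u * e"
      using w(2) l2_norm_nonneg by (simp add: mult_left_mono)
    finally have "l2_norm u * l2_norm u \<le> l2_norm u * e" by (simp add: power2_eq_square)
    then show ?thesis using l2_norm_nonneg[of u]
      by (metis less_eq_real_def mult_le_cancel_left_pos e0)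
  qed
  then have "l2_norm u \<le> 0" by (meson dense not_le)
  then have "l2_norm u = 0" using l2_norm_nonneg[of u] by simp
  then show ?thesis by (rule l2_norm_eq_0_imp_ae_zero[OF u])
qed

lemma self_adjoint_op_ae_cong:
  assumes sa: "self_adjoint_op D L" and ab: "a \<in> D" "b \<in> D" "ae_eq a b"
  shows "ae_eq (L a) (L b)"
proof -
  have u: "sq_int (\<lambda>x. L a x - L b x)" using self_adjoint_op_image_sq_int[OF sa] ab sq_int_diff by blast
  have "ae_eq (\<lambda>x. L a x - L b x) (\<lambda>x. 0)"
  proof (rule orthogonal_to_dense_domain_imp_ae_zero[OF sa u])
    fix w assume w: "w \<in> D"
    have "l2_inner (\<lambda>x. L a x - L b x) w = l2_inner (L a) w - l2_inner (L b) w"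
      using l2_inner_diff_left self_adjoint_op_image_sq_int[OF sa] self_adjoint_op_domain_sq_int[OF sa] ab w by blast
    also have "\<dots> = l2_inner a (L w) - l2_inner b (L w)"
      using self_adjoint_op_symmetric[OF sa] ab w by simp
    also have "l2_inner a (L w) = l2_inner b (L w)"
      using l2_inner_ae[OF self_adjoint_op_domain_sq_int[OF sa ab(1)] self_adjoint_op_image_sq_int[OF sa w] ab(3) ae_eq_refl] .
    finally show "l2_inner (\<lambda>x. L a x - L b x) w = 0" by simp
  qed
  then show ?thesis by (auto simp: ae_eq_def elim!: eventually_mono)
qed

definition low_eigenvectors ::
    "(real \<Rightarrow> real) set \<Rightarrow> ((real \<Rightarrow> real) \<Rightarrow> (real \<Rightarrow> real)) \<Rightarrow> real \<Rightarrow> (real \<Rightarrow> real) set" where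
  "low_eigenvectors D L lam = \<Union>{eigenspace_op D L \<mu> | \<mu>. \<bar>\<mu>\<bar> \<le> lam}"

lemma PW_space_eq_closure_span: "PW_space D L lam = l2_closure (lin_span (low_eigenvectors D L lam))"
  by (simp add: PW_space_def low_eigenvectors_def)

lemma low_eigenvectors_subset_domain: "low_eigenvectors D L lam \<subseteq> D"
  by (auto simp: low_eigenvectors_def eigenspace_op_def)

lemma low_eigenvectors_mono: "lam \<le> mu \<Longrightarrow> low_eigenvectors D L lam \<subseteq> low_eigenvectors D L mu"
proof
  fix x assume "lam \<le> mu" "x \<in> low_eigenvectors D L lam"
  then obtain m where "x \<in> eigenspace_op D L m" "\<bar>m\<bar> \<le> lam" by (auto simp: low_eigenvectors_def)
  then show "x \<in> low_eigenvectors D L mu" using \<open>lam \<le> mu\<close> unfolding low_eigenvectors_def by force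
qed

lemma lin_span_low_eigenvectors_L_invariant:
  assumes sa: "self_adjoint_op D L" and s: "s \<in> lin_span (low_eigenvectors D L lam)"
  shows "s \<in> D \<and> (\<exists>s'\<in>lin_span (low_eigenvectors D L lam). ae_eq (L s) s')"
  using s
proof (rule lin_span_induct)
  show "(\<lambda>x. 0) \<in> D \<and> (\<exists>s'\<in>lin_span (low_eigenvectors D L lam). ae_eq (L (\<lambda>x. 0)) s')"
  proof -
    have "ae_eq (L (\<lambda>x. 0 * 0 + 0 * 0)) (\<lambda>x. 0 * L (\<lambda>x. 0) x + 0 * L (\<lambda>x. 0) x)"
      using self_adjoint_op_linear[OF sa self_adjoint_op_domain_zero[OF sa] self_adjoint_op_domain_zero[OF sa], of 0 0] by simp
    then show ?thesis using lin_span_zero self_adjoint_op_domain_zero[OF sa] by auto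
  qed
next
  fix s g c
  assume IH: "s \<in> D \<and> (\<exists>s'\<in>lin_span (low_eigenvectors D L lam). ae_eq (L s) s')" and g: "g \<in> low_eigenvectors D L lam"
  obtain s' where s': "s' \<in> lin_span (low_eigenvectors D L lam)" "ae_eq (L s) s'" using IH by blast
  have sD: "s \<in> D" using IH by blast
  obtain \<mu> where mu: "g \<in> D" "ae_eq (L g) (\<lambda>x. \<mu> * g x)"
    using g by (auto simp: low_eigenvectors_def eigenspace_op_def)
  have "(\<lambda>x. 1 * s x + c * g x) \<in> D" using self_adjoint_op_domain_lincomb[OF sa sD mu(1)] .
  then have D1: "(\<lambda>x. s x + c * g x) \<in> D" by simp
  have "ae_eq (L (\<lambda>x. 1 * s x + c * g x)) (\<lambda>x. 1 * L s x + c * L g x)"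
    using self_adjoint_op_linear[OF sa sD mu(1)] .
  then have a1: "ae_eq (L (\<lambda>x. s x + c * g x)) (\<lambda>x. L s x + c * L g x)" by simp
  have a2: "ae_eq (\<lambda>x. L s x + c * L g x) (\<lambda>x. s' x + (c * \<mu>) * g x)"
    using s'(2) mu(2) unfolding ae_eq_def by (auto elim: eventually_elim2)
  have "(\<lambda>x. s' x + (c * \<mu>) * g x) \<in> lin_span (low_eigenvectors D L lam)"
    using lin_span_add_generator[OF s'(1) g] .
  then show "(\<lambda>x. s x + c * g x) \<in> D \<and> (\<exists>s'\<in>lin_span (low_eigenvectors D L lam). ae_eq (L (\<lambda>x. s x + c * g x)) s')"
    using D1 ae_eq_trans[OF a1 a2] by blast
qed

lemma low_eigenvectors_sq_int: "self_adjoint_op D L \<Longrightarrow> low_eigenvectors D L lam \<subseteq> {f. sq_int f}"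
  using low_eigenvectors_subset_domain self_adjoint_op_domain_sq_int by blast

lemma PW_space_sq_int: "f \<in> PW_space D L lam \<Longrightarrow> sq_int f"
  by (simp add: PW_space_def l2_closure_def)

lemma lin_span_low_eigenvectors_in_PW_space:
  assumes sa: "self_adjoint_op D L" and s: "s \<in> lin_span (low_eigenvectors D L lam)"
  shows "s \<in> PW_space D L lam"
proof -
  have "sq_int s" using lin_span_sq_int[OF low_eigenvectors_sq_int[OF sa] s] .
  moreover have "l2_norm (\<lambda>x. s x - s x) = 0" by (simp add: l2_norm_def l2_inner_def)
  ultimately show ?thesis unfolding PW_space_eq_closure_span l2_closure_def using s by (auto intro!: bexI[of _ s])
qed

lemma closed_l2_subspace_PW_space:
  assumes sa: "self_adjoint_op D L"
  shows "closed_l2_subspace (PW_space D L lam)"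
  unfolding PW_space_eq_closure_span
  using closed_l2_subspace_l2_closure_lin_span[OF low_eigenvectors_sq_int[OF sa]] .

lemma PW_space_mono:
  assumes "lam \<le> mu"
  shows "PW_space D L lam \<subseteq> PW_space D L mu"
  unfolding PW_space_eq_closure_span l2_closure_def using lin_span_mono[OF low_eigenvectors_mono[OF assms]] by blast

lemma spec_proj_orthogonal:
  assumes sa: "self_adjoint_op D L" and f: "sq_int f"
  shows "spec_proj D L lam f \<in> PW_space D L lam \<and>
         (\<forall>v\<in>PW_space D L lam. l2_inner (\<lambda>x. f x - spec_proj D L lam f x) v = 0)"
proof -
  define Q where "Q = (\<lambda>p. p \<in> PW_space D L lam \<and> (\<forall>v\<in>PW_space D L lam. l2_inner (\<lambda>x. f x - p x) v = 0))"
  have "\<exists>p. Q p" unfolding Q_def using closed_l2_subspace_orthogonal_projection[OF closed_l2_subspace_PW_space[OF sa] f] by blast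
  then have "Q (SOME p. Q p)" by (rule someI_ex)
  moreover have "spec_proj D L lam f = (SOME p. Q p)" unfolding spec_proj_def Q_def by simp
  ultimately show ?thesis unfolding Q_def by simp
qed

lemma spec_proj_ae_fixes_PW_space:
  assumes sa: "self_adjoint_op D L" and g: "g \<in> PW_space D L lam"
  shows "ae_eq (spec_proj D L lam g) g"
proof -
  let ?P = "spec_proj D L lam"
  have gs: "sq_int g" using PW_space_sq_int g by blast
  have c: "?P g \<in> PW_space D L lam" "\<forall>v\<in>PW_space D L lam. l2_inner (\<lambda>x. g x - ?P g x) v = 0"
    using spec_proj_orthogonal[OF sa gs] by auto
  have "(\<lambda>x. 1 * g x + (-1) * ?P g x) \<in> PW_space D L lam"
    using closed_l2_subspace_PW_space[OF sa] g c(1) unfolding closed_l2_subspace_def by blast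
  then have u: "(\<lambda>x. g x - ?P g x) \<in> PW_space D L lam" by simp
  have "l2_inner (\<lambda>x. g x - ?P g x) (\<lambda>x. g x - ?P g x) = 0" using c(2) u by blast
  then have "ae_eq (\<lambda>x. g x - ?P g x) (\<lambda>x. 0)" using l2_inner_self_eq_0_imp_ae_zero PW_space_sq_int[OF u] by blast
  then show ?thesis by (auto simp: ae_eq_def elim!: eventually_mono)
qed

lemma l2_norm_spec_proj_le:
  assumes sa: "self_adjoint_op D L" and f: "sq_int f"
  shows "l2_norm (spec_proj D L lam f) \<le> l2_norm f"
proof -
  let ?P = "spec_proj D L lam"
  have c: "?P f \<in> PW_space D L lam" "\<forall>v\<in>PW_space D L lam. l2_inner (\<lambda>x. f x - ?P f x) v = 0"
    using spec_proj_orthogonal[OF sa f] by auto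
  have ps: "sq_int (?P f)" using PW_space_sq_int c(1) by blast
  have a: "sq_int (\<lambda>x. f x - ?P f x)" using sq_int_diff[OF f ps] .
  have "(l2_norm (\<lambda>x. (f x - ?P f x) + ?P f x))\<^sup>2
     = (l2_norm (\<lambda>x. f x - ?P f x))\<^sup>2 + 2 * l2_inner (\<lambda>x. f x - ?P f x) (?P f) + (l2_norm (?P f))\<^sup>2"
    by (rule l2_norm_add_sq[OF a ps])
  then have "(l2_norm f)\<^sup>2 = (l2_norm (\<lambda>x. f x - ?P f x))\<^sup>2 + (l2_norm (?P f))\<^sup>2"
    using c by simp
  then have "(l2_norm (?P f))\<^sup>2 \<le> (l2_norm f)\<^sup>2" by simp
  then show ?thesis using l2_norm_nonneg power2_le_imp_le by blast
qed

section \<open>Graphon shift operators on Paley-Wiener spaces\<close>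

lemma graphon_bounded: "graphon W \<Longrightarrow> \<exists>B\<ge>0. \<forall>u\<in>{0..1}. \<forall>v\<in>{0..1}. \<bar>W u v\<bar> \<le> B"
proof -
  assume "graphon W"
  then obtain B where B: "\<forall>u\<in>{0..1}. \<forall>v\<in>{0..1}. \<bar>W u v\<bar> \<le> B" unfolding graphon_def by blast
  then have "\<bar>W 0 0\<bar> \<le> B" by simp
  then have "B \<ge> 0" using abs_ge_zero order_trans by blast
  then show ?thesis using B by blast
qed

lemma T_op_bounded:
  assumes W: "graphon W"
  shows "\<exists>B\<ge>0. \<forall>h. sq_int h \<longrightarrow> sq_int (T_op W h) \<longrightarrow> l2_norm (T_op W h) \<le> B * l2_norm h"
proof -
  obtain B where B: "B \<ge> 0" "\<And>u v. u \<in> {0..1} \<Longrightarrow> v \<in> {0..1} \<Longrightarrow> \<bar>W u v\<bar> \<le> B"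
    using graphon_bounded[OF W] by blast
  have "l2_norm (T_op W h) \<le> B * l2_norm h" if h: "sq_int h" and Th: "sq_int (T_op W h)" for h
  proof -
    define A where "A = (LINT u|leb01. \<bar>h u\<bar>)"
    have A0: "0 \<le> A" unfolding A_def by (intro integral_nonneg_AE AE_I2) simp
    have hi: "integrable leb01 h" using sq_int_integrable[OF h] .
    have pt: "\<bar>T_op W h v\<bar> \<le> B * A" if v: "v \<in> {0..1}" for v
    proof (cases "integrable leb01 (\<lambda>u. W v u * h u)")
      case True
      have "\<bar>T_op W h v\<bar> = \<bar>LINT u|leb01. W v u * h u\<bar>" by (simp add: T_op_def)
      also have "\<dots> \<le> (LINT u|leb01. B * \<bar>h u\<bar>)"
      proof (rule integral_abs_bound_integral[OF True])
        show "integrable leb01 (\<lambda>u. B * \<bar>h u\<bar>)" using hi by simp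
        fix u assume "u \<in> space leb01"
        then have "\<bar>W v u\<bar> \<le> B" using B(2) v by simp
        then show "\<bar>W v u * h u\<bar> \<le> B * \<bar>h u\<bar>" by (simp add: abs_mult mult_right_mono)
      qed
      also have "\<dots> = B * A" by (simp add: A_def)
      finally show ?thesis .
    next
      case False
      then have "T_op W h v = 0" unfolding T_op_def by (rule not_integrable_integral_eq)
      then show ?thesis using A0 B(1) by simp
    qed
    have "(l2_norm (T_op W h))\<^sup>2 = (LINT v|leb01. (T_op W h v)\<^sup>2)"
      unfolding l2_norm_sq l2_inner_def by (simp add: power2_eq_square)
    also have "\<dots> \<le> (LINT v|leb01. (B * A)\<^sup>2)"
    proof (rule integral_mono)
      show "integrable leb01 (\<lambda>v. (T_op W h v)\<^sup>2)" using sq_int_integrable_square[OF Th] .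
      show "integrable leb01 (\<lambda>v. (B * A)\<^sup>2)" using finite_measure.integrable_const[OF finite_measure_leb01] by simp
      fix v assume "v \<in> space leb01"
      then have "\<bar>T_op W h v\<bar> \<le> B * A" using pt by simp
      then have "\<bar>T_op W h v\<bar>^2 \<le> (B * A)^2" by (intro power_mono) auto
      then show "(T_op W h v)\<^sup>2 \<le> (B * A)\<^sup>2" by simp
    qed
    also have "\<dots> = (B * A)\<^sup>2" using measure_leb01_space by simp
    finally have "(l2_norm (T_op W h))\<^sup>2 \<le> (B * A)\<^sup>2" .
    then have "l2_norm (T_op W h) \<le> B * A" by (rule power2_le_imp_le) (use A0 B(1) in simp)
    also have "\<dots> \<le> B * l2_norm h" using l1_norm_le_l2_norm[OF h] B(1) by (simp add: A_def mult_left_mono)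
    finally show ?thesis .
  qed
  then show ?thesis using B(1) by blast
qed

definition spectral_graphon ::
    "(real \<Rightarrow> real) set \<Rightarrow> ((real \<Rightarrow> real) \<Rightarrow> (real \<Rightarrow> real)) \<Rightarrow> real \<Rightarrow> (real \<Rightarrow> real \<Rightarrow> real) \<Rightarrow> bool"
  where
  "spectral_graphon D L lam W \<longleftrightarrow> graphon W \<and>
     (\<forall>f. sq_int f \<longrightarrow> spec_proj D L lam f \<in> D \<and> ae_eq (L (spec_proj D L lam f)) (T_op W f))"

lemma unbounded_GSO_spectral_graphon: "unbounded_GSO D L \<Longrightarrow> lam > 0 \<Longrightarrow> \<exists>W. spectral_graphon D L lam W"
  unfolding unbounded_GSO_def spectral_graphon_def by blast

lemma unbounded_GSO_self_adjoint: "unbounded_GSO D L \<Longrightarrow> self_adjoint_op D L"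
  unfolding unbounded_GSO_def by blast

lemma spectral_graphon_T_op_sq_int:
  assumes sa: "self_adjoint_op D L" and W: "spectral_graphon D L lam W" and h: "sq_int h"
  shows "sq_int (T_op W h)"
  using W h self_adjoint_op_image_sq_int[OF sa] sq_int_ae_eq unfolding spectral_graphon_def by blast

lemma spectral_graphon_T_op_ae_eq_L:
  assumes sa: "self_adjoint_op D L" and W: "spectral_graphon D L mu W"
    and gD: "g \<in> D" and gPW: "g \<in> PW_space D L lam" and lm: "lam \<le> mu"
  shows "ae_eq (T_op W g) (L g)"
proof -
  have gs: "sq_int g" using self_adjoint_op_domain_sq_int[OF sa gD] .
  have PmD: "spec_proj D L mu g \<in> D" using W gs unfolding spectral_graphon_def by blast
  have "g \<in> PW_space D L mu" using PW_space_mono[OF lm] gPW by blast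
  then have "ae_eq (L (spec_proj D L mu g)) (L g)"
    using self_adjoint_op_ae_cong[OF sa PmD gD spec_proj_ae_fixes_PW_space[OF sa]] by blast
  moreover have "ae_eq (L (spec_proj D L mu g)) (T_op W g)" using W gs unfolding spectral_graphon_def by blast
  ultimately show ?thesis using ae_eq_trans[OF ae_eq_sym] by blast
qed

lemma L_spec_proj_in_PW_space:
  assumes sa: "self_adjoint_op D L" and W: "spectral_graphon D L lam W" and f: "sq_int f"
  shows "L (spec_proj D L lam f) \<in> PW_space D L lam"
proof -
  let ?P = "spec_proj D L lam"
  let ?PW = "PW_space D L lam"
  define g where "g = ?P f"
  have gD: "g \<in> D" using W f unfolding spectral_graphon_def g_def by blast
  have gPW: "g \<in> ?PW" using spec_proj_orthogonal[OF sa f] g_def by blast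
  obtain B where B: "B \<ge> 0" "\<And>h. sq_int h \<Longrightarrow> sq_int (T_op W h) \<Longrightarrow> l2_norm (T_op W h) \<le> B * l2_norm h"
    using T_op_bounded[of W] W unfolding spectral_graphon_def by blast
  (* L maps the span of eigenvectors into itself, and L g - L s = T_W (g - s) a.e. is small
     for s in the span close to g, since T_W is bounded. *)
  have "L g \<in> ?PW"
    unfolding PW_space_eq_closure_span l2_closure_def
  proof (intro CollectI conjI allI impI)
    show "sq_int (L g)" using self_adjoint_op_image_sq_int[OF sa gD] .
    fix e :: real assume e: "e > 0"
    have e1: "e / (B + 1) > 0" using e B(1) by simp
    obtain s where s: "s \<in> lin_span (low_eigenvectors D L lam)" "l2_norm (\<lambda>x. g x - s x) < e / (B + 1)"
      using gPW e1 unfolding PW_space_eq_closure_span l2_closure_def by blast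
    obtain s' where s': "s' \<in> lin_span (low_eigenvectors D L lam)" "ae_eq (L s) s'" and sD: "s \<in> D"
      using lin_span_low_eigenvectors_L_invariant[OF sa s(1)] by blast
    define d where "d = (\<lambda>x. 1 * g x + (-1) * s x)"
    have dPW: "d \<in> ?PW" unfolding d_def using closed_l2_subspace_PW_space[OF sa] gPW lin_span_low_eigenvectors_in_PW_space[OF sa s(1)]
      unfolding closed_l2_subspace_def by blast
    have dD: "d \<in> D" unfolding d_def using self_adjoint_op_domain_lincomb[OF sa gD sD] .
    have ds: "sq_int d" using self_adjoint_op_domain_sq_int[OF sa dD] .
    have a1: "ae_eq (L d) (\<lambda>x. 1 * L g x + (-1) * L s x)" unfolding d_def using self_adjoint_op_linear[OF sa gD sD] .
    have a2: "ae_eq (T_op W d) (L d)" using spectral_graphon_T_op_ae_eq_L[OF sa W dD dPW order_refl] .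
    have a4: "ae_eq (\<lambda>x. L g x - s' x) (T_op W d)"
    proof -
      have "ae_eq (\<lambda>x. L g x - s' x) (\<lambda>x. 1 * L g x + (-1) * L s x)"
        using s'(2) unfolding ae_eq_def by (auto elim!: eventually_mono)
      then have "ae_eq (\<lambda>x. L g x - s' x) (L d)" using ae_eq_sym[OF a1] by (rule ae_eq_trans)
      then show ?thesis using ae_eq_sym[OF a2] by (rule ae_eq_trans)
    qed
    have s's: "sq_int s'" using lin_span_sq_int[OF low_eigenvectors_sq_int[OF sa] s'(1)] .
    have "l2_norm (\<lambda>x. L g x - s' x) = l2_norm (T_op W d)"
      using l2_norm_ae[OF sq_int_diff[OF self_adjoint_op_image_sq_int[OF sa gD] s's] a4] .
    also have "\<dots> \<le> B * l2_norm d" using B(2) ds spectral_graphon_T_op_sq_int[OF sa W ds] by blast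
    also have "l2_norm d = l2_norm (\<lambda>x. g x - s x)" unfolding d_def by simp
    also have "B * l2_norm (\<lambda>x. g x - s x) \<le> B * (e / (B + 1))"
      using s(2) B(1) by (intro mult_left_mono) auto
    also have "\<dots> < e" using e B(1) by (simp add: field_simps)
    finally show "\<exists>s\<in>lin_span (low_eigenvectors D L lam). l2_norm (\<lambda>x. L g x - s x) < e" using s'(1) by blast
  qed
  then show ?thesis by (simp add: g_def)
qed

lemma compressed_operator_approx:
  assumes sa: "self_adjoint_op D L" and Wl: "spectral_graphon D L lam W" and Wm: "spectral_graphon D L mu Wmu"
    and lm: "lam \<le> mu"
    and K: "\<And>h. sq_int h \<Longrightarrow> sq_int (K h)"
    and Kb: "\<And>h. sq_int h \<Longrightarrow> l2_norm (\<lambda>x. K h x - T_op Wmu h x) \<le> \<epsilon> * l2_norm h"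
    and eps: "\<epsilon> \<ge> 0" and f: "sq_int f"
  shows "l2_norm (\<lambda>x. spec_proj D L lam (K (spec_proj D L lam f)) x - L (spec_proj D L lam f) x) \<le> \<epsilon> * l2_norm f"
proof -
  let ?P = "spec_proj D L lam"
  let ?PW = "PW_space D L lam"
  define g where "g = ?P f"
  have gD: "g \<in> D" using Wl f unfolding spectral_graphon_def g_def by blast
  have gPW: "g \<in> ?PW" using spec_proj_orthogonal[OF sa f] g_def by blast
  have gs: "sq_int g" using self_adjoint_op_domain_sq_int[OF sa gD] .
  have LgPW: "L g \<in> ?PW" using L_spec_proj_in_PW_space[OF sa Wl f] g_def by simp
  have Lgs: "sq_int (L g)" using self_adjoint_op_image_sq_int[OF sa gD] .
  have Kgs: "sq_int (K g)" using K[OF gs] .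
  have PK: "?P (K g) \<in> ?PW" "\<forall>v\<in>?PW. l2_inner (\<lambda>x. K g x - ?P (K g) x) v = 0"
    using spec_proj_orthogonal[OF sa Kgs] by auto
  have PKs: "sq_int (?P (K g))" using PW_space_sq_int PK(1) by blast
  define z where "z = (\<lambda>x. 1 * ?P (K g) x + (-1) * L g x)"
  have zPW: "z \<in> ?PW" unfolding z_def using closed_l2_subspace_PW_space[OF sa] PK(1) LgPW
    unfolding closed_l2_subspace_def by blast
  have zs: "sq_int z" using PW_space_sq_int zPW by blast
  have z_eq: "z = (\<lambda>x. ?P (K g) x - L g x)" unfolding z_def by simp
  have Tgs: "sq_int (T_op Wmu g)" using spectral_graphon_T_op_sq_int[OF sa Wm gs] .
  have aeT: "ae_eq (T_op Wmu g) (L g)"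
    using spectral_graphon_T_op_ae_eq_L[OF sa Wm gD gPW lm] .
  (* Since z lies in PW, testing against z removes P, and T_(W_mu) g = L g because P_mu fixes g. *)
  have "(l2_norm z)\<^sup>2 = l2_inner z z" by (rule l2_norm_sq)
  also have "\<dots> = l2_inner (?P (K g)) z - l2_inner (L g) z"
    unfolding z_eq using l2_inner_diff_left[OF PKs Lgs zs] by (simp add: z_eq)
  also have "l2_inner (?P (K g)) z = l2_inner (K g) z"
    using PK(2) zPW l2_inner_diff_left[OF Kgs PKs zs] by simp
  also have "l2_inner (L g) z = l2_inner (T_op Wmu g) z"
    using l2_inner_ae[OF Tgs zs aeT ae_eq_refl] by simp
  also have "l2_inner (K g) z - l2_inner (T_op Wmu g) z = l2_inner (\<lambda>x. K g x - T_op Wmu g x) z"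
    using l2_inner_diff_left[OF Kgs Tgs zs] by simp
  also have "\<dots> \<le> l2_norm (\<lambda>x. K g x - T_op Wmu g x) * l2_norm z"
    using l2_Cauchy_Schwarz[OF sq_int_diff[OF Kgs Tgs] zs] by simp
  also have "\<dots> \<le> (\<epsilon> * l2_norm f) * l2_norm z"
  proof (rule mult_right_mono)
    show "l2_norm (\<lambda>x. K g x - T_op Wmu g x) \<le> \<epsilon> * l2_norm f"
    proof -
      have "\<epsilon> * l2_norm g \<le> \<epsilon> * l2_norm f"
        using l2_norm_spec_proj_le[OF sa f] eps g_def by (simp add: mult_left_mono)
      then show ?thesis using Kb[OF gs] by linarith
    qed
  qed (rule l2_norm_nonneg)
  finally have "l2_norm z * l2_norm z \<le> (\<epsilon> * l2_norm f) * l2_norm z" by (simp add: power2_eq_square)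
  then have "l2_norm z \<le> \<epsilon> * l2_norm f"
    using eps l2_norm_nonneg[of f] l2_norm_nonneg[of z] mult_right_le_imp_le[of "l2_norm z" "l2_norm z"]
    by (cases "l2_norm z = 0") auto
  then show ?thesis using z_eq g_def by simp
qed

section \<open>Grid cells and step graphons\<close>

(* cell_interval N i is the interval P_i of the induced graphon, and cell_index N v is the i with
   v in P_i; the latter is meaningful only for 0 <= v < 1. *)
definition cell_interval :: "nat \<Rightarrow> nat \<Rightarrow> real set" where
  "cell_interval N i = {(real i - 1) / real N ..< real i / real N}"

definition cell_index :: "nat \<Rightarrow> real \<Rightarrow> nat" where
  "cell_index N v = nat \<lfloor>v * real N\<rfloor> + 1"

definition cell :: "nat \<Rightarrow> nat \<Rightarrow> nat \<Rightarrow> (real \<times> real) set" where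
  "cell N i j = cell_interval N i \<times> cell_interval N j"

definition unit_square :: "(real \<times> real) set" where
  "unit_square = {0..<1} \<times> {0..<1}"

lemma cell_index_mem:
  assumes N: "N \<ge> 1" and v: "v \<in> {0..<1}"
  shows "cell_index N v \<in> {1..N} \<and> v \<in> cell_interval N (cell_index N v)"
proof -
  define f where "f = \<lfloor>v * real N\<rfloor>"
  have Np: "real N > 0" using N by simp
  have f0: "0 \<le> f" unfolding f_def using v by simp
  have fle: "real_of_int f \<le> v * real N" unfolding f_def by simp
  have flt: "v * real N < real_of_int f + 1" unfolding f_def by linarith
  have "v * real N < real N" using v Np by simp
  then have "real_of_int f < real N" using fle by linarith
  then have fN: "f < int N" by linarith
  have i: "cell_index N v = nat f + 1" unfolding cell_index_def f_def by simp
  have ri: "real (cell_index N v) = real_of_int f + 1" unfolding i using f0 by simp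
  have "cell_index N v \<in> {1..N}" unfolding i using fN f0 by auto
  moreover have "(real (cell_index N v) - 1) / real N \<le> v"
    unfolding ri using fle Np by (simp add: divide_le_eq)
  moreover have "v < real (cell_index N v) / real N"
    unfolding ri using flt Np by (simp add: less_divide_eq)
  ultimately show ?thesis by (simp add: cell_interval_def)
qed

lemma cell_index_eq:
  assumes N: "N \<ge> 1" and i: "i \<in> {1..N}" and v: "v \<in> cell_interval N i"
  shows "v \<in> {0..<1} \<and> cell_index N v = i"
proof -
  have Np: "real N > 0" using N by simp
  have l: "real i - 1 \<le> v * real N" using v Np by (simp add: cell_interval_def divide_le_eq)
  have u: "v * real N < real i" using v Np by (simp add: cell_interval_def less_divide_eq)
  have "\<lfloor>v * real N\<rfloor> = int i - 1"
    using l u by (intro floor_unique) auto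
  then have "cell_index N v = i" unfolding cell_index_def using i by auto
  moreover have "0 \<le> v"
  proof -
    have "0 \<le> real i - 1" using i by simp
    then have "0 \<le> v * real N" using l by linarith
    then show ?thesis using Np by (simp add: zero_le_mult_iff)
  qed
  moreover have "v < 1"
  proof -
    have "real i \<le> real N" using i by simp
    then have "v * real N < real N" using u by simp
    then show ?thesis using Np by simp
  qed
  ultimately show ?thesis by simp
qed

lemma indicator_cell_interval:
  assumes N: "N \<ge> 1" and i: "i \<in> {1..N}"
  shows "indicator {(real i - 1) / real N ..< real i / real N} v
    = (if v \<in> {0..<1} \<and> cell_index N v = i then 1 else (0::real))"
  using cell_index_eq[OF N i, of v] cell_index_mem[OF N, of v] by (auto simp: indicator_def cell_interval_def)

lemma induced_graphon_eq_cell_index: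
  assumes N: "N \<ge> 1"
  shows "induced_graphon N a v u = (if v \<in> {0..<1} \<and> u \<in> {0..<1} then a (cell_index N v) (cell_index N u) else 0)"
proof -
  have "induced_graphon N a v u = (\<Sum>i\<in>{1..N}. \<Sum>j\<in>{1..N}. a i j *
      (if v \<in> {0..<1} \<and> cell_index N v = i then 1 else 0) * (if u \<in> {0..<1} \<and> cell_index N u = j then 1 else 0))"
    unfolding induced_graphon_def
    by (intro sum.cong refl) (simp add: indicator_cell_interval[OF N])
  also have "\<dots> = (if v \<in> {0..<1} \<and> u \<in> {0..<1} then a (cell_index N v) (cell_index N u) else 0)"
  proof (cases "v \<in> {0..<1} \<and> u \<in> {0..<1}")
    case True
    have iv: "cell_index N v \<in> {1..N}" "cell_index N u \<in> {1..N}" using cell_index_mem[OF N] True by auto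
    have "(\<Sum>i\<in>{1..N}. \<Sum>j\<in>{1..N}. a i j *
      (if v \<in> {0..<1} \<and> cell_index N v = i then 1 else 0) * (if u \<in> {0..<1} \<and> cell_index N u = j then 1 else 0))
      = (\<Sum>i\<in>{1..N}. \<Sum>j\<in>{1..N}. if cell_index N v = i \<and> cell_index N u = j then a i j else 0)"
      using True by (intro sum.cong refl) auto
    also have "\<dots> = (\<Sum>i\<in>{1..N}. if cell_index N v = i then a i (cell_index N u) else 0)"
    proof (intro sum.cong refl)
      fix i assume "i \<in> {1..N}"
      show "(\<Sum>j\<in>{1..N}. if cell_index N v = i \<and> cell_index N u = j then a i j else 0) = (if cell_index N v = i then a i (cell_index N u) else 0)"
      proof (cases "cell_index N v = i")
        case True
        then show ?thesis using iv by (simp add: sum.delta')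
      next
        case False
        then show ?thesis by simp
      qed
    qed
    also have "\<dots> = a (cell_index N v) (cell_index N u)"
      using iv by (simp add: sum.delta')
    finally show ?thesis using True by simp
  next
    case False
    then show ?thesis by auto
  qed
  finally show ?thesis .
qed

lemma abs_induced_graphon_le:
  assumes N1: "N \<ge> 1"
  shows "\<bar>induced_graphon N a u v\<bar> \<le> (\<Sum>i\<in>{1..N}. \<Sum>j\<in>{1..N}. \<bar>a i j\<bar>)"
proof (cases "u \<in> {0..<1} \<and> v \<in> {0..<1}")
  case True
  then have i: "cell_index N u \<in> {1..N}" "cell_index N v \<in> {1..N}" using cell_index_mem[OF N1] by auto
  have "\<bar>a (cell_index N u) (cell_index N v)\<bar> \<le> (\<Sum>j\<in>{1..N}. \<bar>a (cell_index N u) j\<bar>)"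
    using i by (intro member_le_sum) auto
  also have "\<dots> \<le> (\<Sum>i\<in>{1..N}. \<Sum>j\<in>{1..N}. \<bar>a i j\<bar>)" using i
    by (intro member_le_sum[of _ _ "\<lambda>i. \<Sum>j\<in>{1..N}. \<bar>a i j\<bar>"]) (auto intro: sum_nonneg)
  finally show ?thesis using True by (simp add: induced_graphon_eq_cell_index[OF N1])
next
  case False
  have "0 \<le> (\<Sum>i\<in>{1..N}. \<Sum>j\<in>{1..N}. \<bar>a i j\<bar>)" by (intro sum_nonneg) auto
  then show ?thesis using False by (auto simp: induced_graphon_eq_cell_index[OF N1])
qed

lemma borel_measurable_induced_graphon:
  "(\<lambda>z. induced_graphon N a (fst z) (snd z)) \<in> borel_measurable (borel :: (real \<times> real) measure)"
proof -
  have [measurable]: "(fst :: real \<times> real \<Rightarrow> real) \<in> borel_measurable borel"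
    "(snd :: real \<times> real \<Rightarrow> real) \<in> borel_measurable borel"
    by (intro borel_measurable_continuous_onI continuous_intros)+
  show ?thesis unfolding induced_graphon_def by measurable
qed

lemma unit_square_borel: "unit_square \<in> sets borel"
proof -
  have "unit_square \<in> sets (borel \<Otimes>\<^sub>M borel)" unfolding unit_square_def by (intro pair_measureI) auto
  then show ?thesis by (simp only: borel_prod)
qed

lemma bounded_unit_square: "bounded unit_square"
proof -
  have "unit_square \<subseteq> cbox (0,0) (1,1)" unfolding unit_square_def cbox_Pair_eq by auto
  then show ?thesis using bounded_cbox bounded_subset by blast
qed

lemma emeasure_unit_square: "emeasure lborel unit_square = 1"
proof -
  have "emeasure (lborel :: (real \<times> real) measure) unit_square = emeasure (lborel \<Otimes>\<^sub>M lborel) ({0..<1::real} \<times> {0..<1::real})"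
    unfolding unit_square_def lborel_prod ..
  also have "\<dots> = emeasure lborel {0..<1::real} * emeasure lborel {0..<1::real}"
    by (rule lborel.emeasure_pair_measure_Times) auto
  finally show ?thesis by simp
qed

lemma measure_unit_square: "measure lborel unit_square = 1"
  by (simp add: measure_def emeasure_unit_square)

lemma cell_interval_dist: "x \<in> cell_interval N i \<Longrightarrow> y \<in> cell_interval N i \<Longrightarrow> N \<ge> 1 \<Longrightarrow> \<bar>x - y\<bar> < 1 / real N"
  unfolding cell_interval_def by (auto simp: field_simps abs_less_iff)

lemma dist_in_cell:
  assumes N: "N \<ge> 1" and z: "z \<in> cell N i j" and w: "w \<in> cell N i j"
  shows "dist z w < 2 / real N"
proof -
  have a: "\<bar>fst z - fst w\<bar> < 1 / real N" using z w N cell_interval_dist by (auto simp: cell_def)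
  have b: "\<bar>snd z - snd w\<bar> < 1 / real N" using z w N cell_interval_dist by (auto simp: cell_def)
  have "dist z w = sqrt ((dist (fst z) (fst w))\<^sup>2 + (dist (snd z) (snd w))\<^sup>2)"
    by (simp add: dist_prod_def)
  also have "\<dots> \<le> \<bar>dist (fst z) (fst w)\<bar> + \<bar>dist (snd z) (snd w)\<bar>"
    by (rule sqrt_sum_squares_le_sum_abs)
  also have "\<dots> < 2 / real N" using a b by (simp add: dist_real_def)
  finally show ?thesis .
qed

definition cell_cover :: "nat \<Rightarrow> (real \<times> real) set \<Rightarrow> (real \<times> real) set" where
  "cell_cover N K = {z \<in> unit_square. cell N (cell_index N (fst z)) (cell_index N (snd z)) \<inter> K \<noteq> {}}"

lemma cell_cover_subset_unit_square: "cell_cover N K \<subseteq> unit_square"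
  unfolding cell_cover_def by blast

lemma mem_own_cell:
  assumes N: "N \<ge> 1" and z: "z \<in> unit_square"
  shows "z \<in> cell N (cell_index N (fst z)) (cell_index N (snd z))"
  using cell_index_mem[OF N, of "fst z"] cell_index_mem[OF N, of "snd z"] z by (auto simp: unit_square_def cell_def mem_Times_iff)

lemma subset_cell_cover: "N \<ge> 1 \<Longrightarrow> K \<subseteq> unit_square \<Longrightarrow> K \<subseteq> cell_cover N K"
  unfolding cell_cover_def using mem_own_cell by blast

lemma cell_cover_subset_neighbourhood:
  assumes N: "N \<ge> 1" and U: "(\<Union>x\<in>K. ball x \<epsilon>) \<subseteq> U" and e: "2 / real N \<le> \<epsilon>"
  shows "cell_cover N K \<subseteq> U"
proof
  fix z assume "z \<in> cell_cover N K"
  then obtain x where z: "z \<in> unit_square" and x: "x \<in> cell N (cell_index N (fst z)) (cell_index N (snd z))" "x \<in> K"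
    unfolding cell_cover_def by blast
  have "dist x z < 2 / real N" using dist_in_cell[OF N x(1) mem_own_cell[OF N z]] .
  then have "z \<in> ball x \<epsilon>" using e by (simp add: dist_commute)
  then show "z \<in> U" using U x(2) by blast
qed

lemma cell_swap: "(b, a) \<in> cell N j i \<longleftrightarrow> (a, b) \<in> cell N i j"
  by (auto simp: cell_def)

lemma cell_Int_symmetric:
  assumes K: "\<And>a b. (a, b) \<in> K \<Longrightarrow> (b, a) \<in> K"
  shows "cell N i j \<inter> K \<noteq> {} \<longleftrightarrow> cell N j i \<inter> K \<noteq> {}"
proof -
  have *: "cell N j i \<inter> K \<noteq> {}" if ne: "cell N i j \<inter> K \<noteq> {}" for i j
  proof -
    obtain p where p: "p \<in> cell N i j" "p \<in> K" using ne by blast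
    obtain a b where "p = (a, b)" by (cases p)
    then have "(a, b) \<in> cell N i j" "(a, b) \<in> K" using p by auto
    then have "(b, a) \<in> cell N j i" "(b, a) \<in> K" using cell_swap K by auto
    then show ?thesis by blast
  qed
  show ?thesis using *[of i j] *[of j i] by blast
qed

lemma induced_graphon_cell_cover_sum:
  assumes N: "N \<ge> 1" and Kset: "finite Kset"
  shows "induced_graphon N (\<lambda>i j. \<Sum>k\<in>Kset. c k * (if cell N i j \<inter> KK k \<noteq> {} then 1 else 0)) (fst z) (snd z)
       = (\<Sum>k\<in>Kset. c k * indicator (cell_cover N (KK k)) z)"
proof (cases "z \<in> unit_square")
  case True
  then have "fst z \<in> {0..<1} \<and> snd z \<in> {0..<1}" by (auto simp: unit_square_def mem_Times_iff)
  then show ?thesis using True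
    by (simp add: induced_graphon_eq_cell_index[OF N] cell_cover_def indicator_def of_bool_def)
next
  case False
  then have "\<not> (fst z \<in> {0..<1} \<and> snd z \<in> {0..<1})" by (auto simp: unit_square_def mem_Times_iff)
  moreover have "indicator (cell_cover N (KK k)) z = (0::real)" for k
    using False cell_cover_subset_unit_square by (auto simp: indicator_def)
  ultimately show ?thesis by (auto simp: induced_graphon_eq_cell_index[OF N])
qed

section \<open>Approximation of symmetric kernels by step graphons\<close>

lemma symmetric_compact_inner_approx:
  fixes A :: "(real \<times> real) set"
  assumes A: "A \<in> sets lebesgue" "bounded A" and sym: "\<And>a b. (a, b) \<in> A \<Longrightarrow> (b, a) \<in> A"
    and eta: "\<eta> > 0"
  obtains K where "compact K" "K \<subseteq> A" "\<And>a b. (a, b) \<in> K \<Longrightarrow> (b, a) \<in> K"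
    "emeasure lebesgue (A - K) < ennreal \<eta>"
proof -
  obtain T where T: "closed T" "T \<subseteq> A" "A - T \<in> lmeasurable" "emeasure lebesgue (A - T) < ennreal \<eta>"
    by (rule sets_lebesgue_inner_closed[OF A(1) eta])
  have Tc: "compact T"
    using T(1,2) A(2) bounded_subset compact_eq_bounded_closed by blast
  define sw where "sw = (\<lambda>z::real \<times> real. (snd z, fst z))"
  define K where "K = T \<union> sw ` T"
  have "continuous_on T sw" unfolding sw_def by (intro continuous_intros)
  then have "compact K" unfolding K_def using Tc compact_continuous_image by blast
  moreover have "K \<subseteq> A"
    unfolding K_def sw_def using T(2) sym by auto
  moreover have "(b, a) \<in> K" if "(a, b) \<in> K" for a b
    using that unfolding K_def sw_def by (force simp: image_iff)
  moreover have "emeasure lebesgue (A - K) < ennreal \<eta>"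
  proof -
    have "T \<in> sets lebesgue" using T(1) by (simp add: borel_closed)
    then have "emeasure lebesgue (A - K) \<le> emeasure lebesgue (A - T)"
      unfolding K_def using A(1) by (intro emeasure_mono) auto
    then show ?thesis using T(4) by (rule le_less_trans)
  qed
  ultimately show ?thesis using that by blast
qed

lemma symmetric_set_cell_approx:
  assumes A: "A \<in> sets borel" "A \<subseteq> unit_square" and sym: "\<And>a b. (a, b) \<in> A \<Longrightarrow> (b, a) \<in> A"
    and eta: "\<eta> > 0"
  obtains K U N0 where "K \<subseteq> A" "A \<subseteq> U" "U \<in> sets borel" "K \<in> sets borel"
    "\<And>a b. (a, b) \<in> K \<Longrightarrow> (b, a) \<in> K" "emeasure lborel (U - K) < ennreal \<eta>"
    "\<And>N. N \<ge> N0 \<Longrightarrow> cell_cover N K \<subseteq> U"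
proof -
  have Al: "A \<in> sets lebesgue" using A(1) by simp
  have e2: "\<eta> / 2 > 0" using eta by simp
  obtain K where K: "compact K" "K \<subseteq> A" "\<And>a b. (a, b) \<in> K \<Longrightarrow> (b, a) \<in> K"
    "emeasure lebesgue (A - K) < ennreal (\<eta> / 2)"
    using symmetric_compact_inner_approx[OF Al bounded_subset[OF bounded_unit_square A(2)] sym e2] by blast
  obtain U where U: "open U" "A \<subseteq> U" "U - A \<in> lmeasurable" "emeasure lebesgue (U - A) < ennreal (\<eta> / 2)"
    by (rule sets_lebesgue_outer_open[OF Al e2])
  have Kb: "K \<in> sets borel" using K(1) by (simp add: compact_imp_closed borel_closed)
  have Ub: "U \<in> sets borel" using U(1) by simp
  have Ul: "U \<in> sets lebesgue" and Kl: "K \<in> sets lebesgue" using Ub Kb by simp_all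
  have "emeasure lborel (U - K) = emeasure lebesgue (U - K)"
    using Ub Kb by simp
  also have "\<dots> \<le> emeasure lebesgue ((U - A) \<union> (A - K))"
    using Ul Kl Al by (intro emeasure_mono) auto
  also have "\<dots> \<le> emeasure lebesgue (U - A) + emeasure lebesgue (A - K)"
    using Ul Al Kl by (intro emeasure_subadditive) auto
  also have "\<dots> < ennreal (\<eta> / 2 + \<eta> / 2)"
    using U(4) K(4) by (rule add_mono_ennreal)
  finally have meas: "emeasure lborel (U - K) < ennreal \<eta>" by simp
  obtain \<epsilon> where eps: "\<epsilon> > 0" "(\<Union>x\<in>K. ball x \<epsilon>) \<subseteq> U"
    using compact_subset_open_imp_ball_epsilon_subset[OF K(1) U(1)] K(2) U(2) by blast
  define N0 where "N0 = nat \<lceil>2 / \<epsilon>\<rceil> + 1"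
  have cov: "cell_cover N K \<subseteq> U" if N: "N \<ge> N0" for N
  proof (rule cell_cover_subset_neighbourhood[OF _ eps(2)])
    show N1: "N \<ge> 1" using N by (simp add: N0_def)
    have "2 / \<epsilon> \<le> real N" using N unfolding N0_def by linarith
    then show "2 / real N \<le> \<epsilon>" using eps(1) N1 by (simp add: field_simps)
  qed
  show ?thesis
    using that[OF K(2) U(2) Ub Kb K(3) meas cov] .
qed

lemma symmetric_sets_cell_approx:
  assumes I: "finite I" and A: "\<And>k. A k \<in> sets borel" "\<And>k. A k \<subseteq> unit_square"
    and sym: "\<And>k a b. (a, b) \<in> A k \<Longrightarrow> (b, a) \<in> A k" and eta: "\<eta> > 0"
  obtains N K U where "N \<ge> 1" "\<And>k. K k \<subseteq> A k" "\<And>k. A k \<subseteq> U k"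
    "\<And>k. U k \<in> sets borel" "\<And>k. K k \<in> sets borel" "\<And>k a b. (a, b) \<in> K k \<Longrightarrow> (b, a) \<in> K k"
    "\<And>k. emeasure lborel (U k - K k) < ennreal \<eta>" "\<And>k. k \<in> I \<Longrightarrow> cell_cover N (K k) \<subseteq> U k"
proof -
  define good where "good k K U N0 \<longleftrightarrow> K \<subseteq> A k \<and> A k \<subseteq> U \<and> U \<in> sets borel \<and> K \<in> sets borel \<and>
    (\<forall>a b. (a, b) \<in> K \<longrightarrow> (b, a) \<in> K) \<and> emeasure lborel (U - K) < ennreal \<eta> \<and>
    (\<forall>N\<ge>N0. cell_cover N K \<subseteq> U)" for k K U and N0 :: nat
  have "\<forall>k. \<exists>K U N0. good k K U N0"
  proof
    fix k
    obtain K U N0 where KU: "K \<subseteq> A k" "A k \<subseteq> U" "U \<in> sets borel" "K \<in> sets borel"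
      "\<And>a b. (a, b) \<in> K \<Longrightarrow> (b, a) \<in> K" "emeasure lborel (U - K) < ennreal \<eta>"
      "\<And>N. N \<ge> N0 \<Longrightarrow> cell_cover N K \<subseteq> U"
      using symmetric_set_cell_approx[OF A(1)[of k] A(2)[of k] sym eta] by blast
    then have "good k K U N0" unfolding good_def by blast
    then show "\<exists>K U N0. good k K U N0" by blast
  qed
  from choice[OF this] obtain K where "\<forall>k. \<exists>U N0. good k (K k) U N0" by blast
  from choice[OF this] obtain U where "\<forall>k. \<exists>N0. good k (K k) (U k) N0" by blast
  from choice[OF this] obtain N0 where KU: "\<And>k. good k (K k) (U k) (N0 k)" by blast
  define N where "N = Max (insert 1 (N0 ` I))"
  have N1: "N \<ge> 1" unfolding N_def using I by simp
  have NN0: "N0 k \<le> N" if "k \<in> I" for k unfolding N_def using I that by simp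
  show ?thesis
  proof (rule that[OF N1])
    fix k a b
    show "K k \<subseteq> A k" "A k \<subseteq> U k" "U k \<in> sets borel" "K k \<in> sets borel"
      "emeasure lborel (U k - K k) < ennreal \<eta>"
      using KU[of k] unfolding good_def by blast+
    show "(a, b) \<in> K k \<Longrightarrow> (b, a) \<in> K k" using KU[of k] unfolding good_def by blast
    show "k \<in> I \<Longrightarrow> cell_cover N (K k) \<subseteq> U k" using KU[of k] NN0 unfolding good_def by blast
  qed
qed

lemma indicator_sandwich_le:
  assumes "K \<subseteq> A" "A \<subseteq> U" "K \<subseteq> C" "C \<subseteq> U"
  shows "\<bar>indicator C z - indicator A z\<bar> \<le> (indicator (U - K) z :: real)"
  using assms by (auto simp: indicator_def)

lemma abs_diff_floor_mult_div_le:
  fixes y c :: real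
  assumes c: "c > 0"
  shows "\<bar>y - real_of_int \<lfloor>c * y\<rfloor> / c\<bar> \<le> 1 / c"
proof -
  have a: "real_of_int \<lfloor>c * y\<rfloor> \<le> c * y" "c * y < real_of_int \<lfloor>c * y\<rfloor> + 1" by linarith+
  have "c * (y - real_of_int \<lfloor>c * y\<rfloor> / c) = c * y - real_of_int \<lfloor>c * y\<rfloor>" using c by (simp add: field_simps)
  then have "0 \<le> c * (y - real_of_int \<lfloor>c * y\<rfloor> / c)" "c * (y - real_of_int \<lfloor>c * y\<rfloor> / c) \<le> 1" using a by linarith+
  then show ?thesis using c by (simp add: zero_le_mult_iff field_simps)
qed

lemma step_approx_pointwise_bound:
  fixes g :: "real \<times> real \<Rightarrow> real" and m :: nat and z :: "real \<times> real"
  assumes m: "m \<ge> 1"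
  and Kset: "finite Kset" and rng: "\<And>z. z \<in> unit_square \<Longrightarrow> \<lfloor>real m * g z\<rfloor> \<in> Kset"
  and g0: "\<And>z. z \<notin> unit_square \<Longrightarrow> g z = 0"
  and KA: "\<And>k. KK k \<subseteq> {z \<in> unit_square. \<lfloor>real m * g z\<rfloor> = k}"
  and AU: "\<And>k. {z \<in> unit_square. \<lfloor>real m * g z\<rfloor> = k} \<subseteq> UU k"
  and KC: "\<And>k. KK k \<subseteq> CC k" and CU: "\<And>k. k \<in> Kset \<Longrightarrow> CC k \<subseteq> UU k"
  and CQ: "\<And>k. CC k \<subseteq> unit_square"
  shows "((\<Sum>k\<in>Kset. (real_of_int k / real m) * indicator (CC k) z) - g z)\<^sup>2
     \<le> 2 / (real m)\<^sup>2 * indicator unit_square z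
        + 2 * (\<Sum>k\<in>Kset. \<bar>real_of_int k / real m\<bar>) * (\<Sum>k\<in>Kset. \<bar>real_of_int k / real m\<bar> * indicator (UU k - KK k) z)"
proof -
  define cs where "cs k = real_of_int k / real m" for k
  define Cm where "Cm = (\<Sum>k\<in>Kset. \<bar>cs k\<bar>)"
  define e where "e k = (indicator (UU k - KK k) z :: real)" for k
  define Y where "Y = (\<Sum>k\<in>Kset. \<bar>cs k\<bar> * e k)"
  have Cm0: "0 \<le> Cm" unfolding Cm_def by (simp add: sum_nonneg)
  have e01: "0 \<le> e k" "e k \<le> 1" for k unfolding e_def by (auto simp: indicator_def)
  have Y0: "0 \<le> Y" unfolding Y_def using e01 by (simp add: sum_nonneg)
  have YC: "Y \<le> Cm" unfolding Y_def Cm_def using e01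
    by (intro sum_mono) (simp add: mult_left_le)
  have mp: "real m > 0" using m by simp
  show ?thesis
  proof (cases "z \<in> unit_square")
    case False
    have "indicator (CC k) z = (0::real)" for k using False CQ by (auto simp: indicator_def)
    then have "((\<Sum>k\<in>Kset. (real_of_int k / real m) * indicator (CC k) z) - g z)\<^sup>2 = 0"
      using g0[OF False] by simp
    moreover have "0 \<le> 2 * Cm * Y" using Cm0 Y0 by simp
    ultimately show ?thesis using False by (simp add: Cm_def Y_def cs_def e_def)
  next
    case True
    define k0 where "k0 = \<lfloor>real m * g z\<rfloor>"
    have k0K: "k0 \<in> Kset" using rng[OF True] k0_def by simp
    have hq: "\<bar>g z - cs k0\<bar> \<le> 1 / real m"
      unfolding cs_def k0_def using abs_diff_floor_mult_div_le[OF mp] .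
    have hk: "\<bar>indicator (CC k) z - (if k = k0 then 1 else 0)\<bar> \<le> e k" if k: "k \<in> Kset" for k
    proof -
      have "(if k = k0 then 1 else 0) = (indicator {z \<in> unit_square. \<lfloor>real m * g z\<rfloor> = k} z :: real)"
        using True by (auto simp: k0_def indicator_def)
      then show ?thesis
        unfolding e_def using indicator_sandwich_le[OF KA AU KC CU[OF k]] by simp
    qed
    define S where "S = (\<Sum>k\<in>Kset. cs k * indicator (CC k) z)"
    have "S - cs k0 = (\<Sum>k\<in>Kset. cs k * (indicator (CC k) z - (if k = k0 then 1 else 0)))"
      using k0K Kset by (simp add: S_def sum_subtractf right_diff_distrib sum.delta if_distrib[of "\<lambda>x. cs _ * x"] cong: if_cong)
    then have "\<bar>S - cs k0\<bar> \<le> (\<Sum>k\<in>Kset. \<bar>cs k * (indicator (CC k) z - (if k = k0 then 1 else 0))\<bar>)"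
      by (simp add: sum_abs)
    also have "\<dots> \<le> Y" unfolding Y_def
      using hk by (intro sum_mono) (simp add: abs_mult mult_left_mono)
    finally have "\<bar>S - g z\<bar> \<le> Y + 1 / real m" using hq by linarith
    then have "(S - g z)\<^sup>2 \<le> (Y + 1 / real m)\<^sup>2"
      using Y0 mp by (metis abs_ge_zero power2_abs power_mono)
    also have "\<dots> \<le> 2 * Y\<^sup>2 + 2 * (1 / real m)\<^sup>2"
      using sum_squares_ge_zero[of "Y - 1 / real m" 0] by (simp add: power2_eq_square algebra_simps)
    also have "2 * Y\<^sup>2 \<le> 2 * Cm * Y" using YC Y0 by (simp add: power2_eq_square mult_right_mono)
    finally have "(S - g z)\<^sup>2 \<le> 2 / (real m)\<^sup>2 + 2 * Cm * Y" by (simp add: power_divide)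
    then show ?thesis using True by (simp add: S_def cs_def Cm_def Y_def e_def)
  qed
qed

lemma nn_integral_indicator_combination_le:
  fixes E :: "'i \<Rightarrow> (real \<times> real) set"
  assumes I: "finite I" and E: "\<And>k. E k \<in> sets borel" "\<And>k. emeasure lborel (E k) < ennreal \<eta>"
    and c: "0 \<le> c" and w: "\<And>k. 0 \<le> w k" and C: "0 \<le> C"
  shows "(\<integral>\<^sup>+z. ennreal (c * indicator unit_square z + C * (\<Sum>k\<in>I. w k * indicator (E k) z)) \<partial>lborel)
    \<le> ennreal (c + C * (\<Sum>k\<in>I. w k) * \<eta>)"
proof -
  define G where "G z = c * indicator unit_square z + C * (\<Sum>k\<in>I. w k * indicator (E k) z)" for z
  have Efin: "emeasure lborel (E k) < \<infinity>" for k
    using E(2)[of k] by (simp add: less_le_trans)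
  have Emeas: "measure lborel (E k) \<le> \<eta>" for k
    using E(2)[of k] by (cases "\<eta> \<ge> 0") (auto simp: measure_def enn2real_leI less_imp_le ennreal_neg)
  have intQ: "integrable lborel (indicator unit_square :: real \<times> real \<Rightarrow> real)"
    using unit_square_borel emeasure_unit_square by (intro integrable_real_indicator) auto
  have intE: "integrable lborel (indicator (E k) :: real \<times> real \<Rightarrow> real)" for k
    using E(1) Efin by (intro integrable_real_indicator) auto
  have i1: "integrable lborel (\<lambda>z. c * indicator unit_square z :: real)"
    using intQ by (rule integrable_mult_right)
  have i2: "integrable lborel (\<lambda>z. \<Sum>k\<in>I. w k * indicator (E k) z :: real)"
    using intE by (intro Bochner_Integration.integrable_sum integrable_mult_right)
  have "(LINT z|lborel. G z) = c * measure lborel unit_square + C * (\<Sum>k\<in>I. w k * measure lborel (E k))"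
    unfolding G_def using i1 integrable_mult_right[OF i2, of C] intE
    by (simp add: Bochner_Integration.integral_add Bochner_Integration.integral_sum)
  also have "\<dots> \<le> c + C * (\<Sum>k\<in>I. w k * \<eta>)"
    using Emeas C w by (simp add: measure_unit_square sum_mono mult_left_mono)
  also have "\<dots> = c + C * (\<Sum>k\<in>I. w k) * \<eta>"
    by (simp add: sum_distrib_right)
  finally have intle: "(LINT z|lborel. G z) \<le> c + C * (\<Sum>k\<in>I. w k) * \<eta>" .
  have "0 \<le> G z" for z
    unfolding G_def using c C w by (intro add_nonneg_nonneg mult_nonneg_nonneg sum_nonneg) auto
  then have "(\<integral>\<^sup>+z. ennreal (G z) \<partial>lborel) = ennreal (LINT z|lborel. G z)"
    using i1 integrable_mult_right[OF i2, of C] unfolding G_def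
    by (intro nn_integral_eq_integral Bochner_Integration.integrable_add) auto
  then show ?thesis using intle ennreal_leI unfolding G_def by fastforce
qed

lemma floor_mult_mem_bounded:
  fixes m :: nat
  assumes "\<bar>y\<bar> \<le> B"
  shows "\<lfloor>real m * y\<rfloor> \<in> {-\<lceil>B * real m\<rceil>..\<lceil>B * real m\<rceil>}"
proof -
  have "\<bar>real m * y\<bar> \<le> B * real m"
    using mult_right_mono[OF assms, of "real m"] by (simp add: abs_mult mult.commute)
  then have a: "- (B * real m) \<le> real m * y" "real m * y \<le> B * real m" by linarith+
  have "\<lfloor>real m * y\<rfloor> \<le> \<lceil>B * real m\<rceil>" using a(2) by (meson floor_le_ceiling floor_mono le_ceiling_iff order_trans)
  moreover have "\<lfloor>- (B * real m)\<rfloor> \<le> \<lfloor>real m * y\<rfloor>" using a(1) by (rule floor_mono)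
  then have "- \<lceil>B * real m\<rceil> \<le> \<lfloor>real m * y\<rfloor>" by (simp add: floor_minus)
  ultimately show ?thesis by simp
qed

lemma step_graphon_quantised_l2_approx:
  fixes g :: "real \<times> real \<Rightarrow> real"
  assumes gm[measurable]: "g \<in> borel_measurable borel" and gB: "\<And>z. \<bar>g z\<bar> \<le> B"
    and g0: "\<And>z. z \<notin> unit_square \<Longrightarrow> g z = 0"
    and gs: "\<And>a b. g (a, b) = g (b, a)" and m1: "m \<ge> 1" and eta0: "\<eta> > 0"
  shows "\<exists>N\<ge>1. \<exists>a. (\<forall>i j. a i j = a j i) \<and>
     (\<integral>\<^sup>+z. ennreal ((induced_graphon N a (fst z) (snd z) - g z)\<^sup>2) \<partial>lborel)
       \<le> ennreal (2 / (real m)\<^sup>2 + 2 * (\<Sum>k\<in>{-\<lceil>B * real m\<rceil>..\<lceil>B * real m\<rceil>}. \<bar>real_of_int k / real m\<bar>)\<^sup>2 * \<eta>)"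
proof -
  define Kset where "Kset = {-\<lceil>B * real m\<rceil>..\<lceil>B * real m\<rceil>}"
  have Kfin: "finite Kset" by (simp add: Kset_def)
  have rng: "\<lfloor>real m * g z\<rfloor> \<in> Kset" for z
    unfolding Kset_def using floor_mult_mem_bounded[OF gB] .
  define cs where "cs k = real_of_int k / real m" for k
  define Cm where "Cm = (\<Sum>k\<in>Kset. \<bar>cs k\<bar>)"
  have Cm0: "0 \<le> Cm" unfolding Cm_def by (simp add: sum_nonneg)
  define A where "A k = {z \<in> unit_square. \<lfloor>real m * g z\<rfloor> = k}" for k
  have Ab: "A k \<in> sets borel" for k unfolding A_def using unit_square_borel by measurable
  have AQ: "A k \<subseteq> unit_square" for k unfolding A_def by blast
  have Asym: "(b, a) \<in> A k" if "(a, b) \<in> A k" for a b k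
    using that gs[of a b] unfolding A_def unit_square_def by auto
  obtain KK UU N where N1: "N \<ge> 1" and KKA: "\<And>k. KK k \<subseteq> A k" and AUU: "\<And>k. A k \<subseteq> UU k"
    and UUb: "\<And>k. UU k \<in> sets borel" and KKb: "\<And>k. KK k \<in> sets borel"
    and KKs: "\<And>k a b. (a, b) \<in> KK k \<Longrightarrow> (b, a) \<in> KK k"
    and Em: "\<And>k. emeasure lborel (UU k - KK k) < ennreal \<eta>"
    and cov: "\<And>k. k \<in> Kset \<Longrightarrow> cell_cover N (KK k) \<subseteq> UU k"
    by (rule symmetric_sets_cell_approx[of Kset A, OF Kfin Ab AQ Asym eta0]) (assumption | rule that)+
  define a where "a i j = (\<Sum>k\<in>Kset. cs k * (if cell N i j \<inter> KK k \<noteq> {} then 1 else 0))" for i j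
  have asym: "a i j = a j i" for i j
    unfolding a_def using cell_Int_symmetric[OF KKs] by (intro sum.cong refl) auto
  define CC where "CC k = cell_cover N (KK k)" for k
  have "(induced_graphon N a (fst z) (snd z) - g z)\<^sup>2
     \<le> 2 / (real m)\<^sup>2 * indicator unit_square z + 2 * Cm * (\<Sum>k\<in>Kset. \<bar>cs k\<bar> * indicator (UU k - KK k) z)" for z
  proof -
    have "induced_graphon N a (fst z) (snd z) = (\<Sum>k\<in>Kset. cs k * indicator (CC k) z)"
      unfolding a_def CC_def using induced_graphon_cell_cover_sum[OF N1 Kfin] by blast
    moreover have "((\<Sum>k\<in>Kset. cs k * indicator (CC k) z) - g z)\<^sup>2
     \<le> 2 / (real m)\<^sup>2 * indicator unit_square z + 2 * Cm * (\<Sum>k\<in>Kset. \<bar>cs k\<bar> * indicator (UU k - KK k) z)"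
      unfolding cs_def Cm_def
    proof (rule step_approx_pointwise_bound[OF m1 Kfin rng g0])
      show "KK k \<subseteq> {z \<in> unit_square. \<lfloor>real m * g z\<rfloor> = k}" for k using KKA[of k] A_def by simp
      show "{z \<in> unit_square. \<lfloor>real m * g z\<rfloor> = k} \<subseteq> UU k" for k using AUU[of k] A_def by simp
      show "KK k \<subseteq> CC k" for k unfolding CC_def using subset_cell_cover[OF N1] KKA[of k] AQ by blast
      show "CC k \<subseteq> UU k" if "k \<in> Kset" for k unfolding CC_def using cov[OF that] .
      show "CC k \<subseteq> unit_square" for k unfolding CC_def by (rule cell_cover_subset_unit_square)
    qed
    ultimately show ?thesis by simp
  qed
  then have "(\<integral>\<^sup>+z. ennreal ((induced_graphon N a (fst z) (snd z) - g z)\<^sup>2) \<partial>lborel)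
      \<le> (\<integral>\<^sup>+z. ennreal (2 / (real m)\<^sup>2 * indicator unit_square z
            + 2 * Cm * (\<Sum>k\<in>Kset. \<bar>cs k\<bar> * indicator (UU k - KK k) z)) \<partial>lborel)"
    by (intro nn_integral_mono ennreal_leI)
  also have "\<dots> \<le> ennreal (2 / (real m)\<^sup>2 + 2 * Cm\<^sup>2 * \<eta>)"
  proof -
    have "UU k - KK k \<in> sets borel" for k using UUb KKb by auto
    from nn_integral_indicator_combination_le[where c = "2 / (real m)\<^sup>2" and w = "\<lambda>k. \<bar>cs k\<bar>"
        and C = "2 * Cm", OF Kfin this Em]
    show ?thesis using Cm0 by (simp add: Cm_def mult.assoc power2_eq_square)
  qed
  finally show ?thesis using N1 asym unfolding Cm_def cs_def Kset_def by blast
qed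

lemma step_graphon_l2_approx:
  fixes g :: "real \<times> real \<Rightarrow> real"
  assumes gm: "g \<in> borel_measurable borel" and gB: "\<And>z. \<bar>g z\<bar> \<le> B"
    and g0: "\<And>z. z \<notin> unit_square \<Longrightarrow> g z = 0"
    and gs: "\<And>a b. g (a, b) = g (b, a)" and dl: "\<delta> > 0"
  shows "\<exists>N\<ge>1. \<exists>a. (\<forall>i j. a i j = a j i) \<and>
     (\<integral>\<^sup>+z. ennreal ((induced_graphon N a (fst z) (snd z) - g z)\<^sup>2) \<partial>lborel) \<le> ennreal \<delta>"
proof -
  define m :: nat where "m = nat \<lceil>4 / \<delta>\<rceil> + 1"
  have m1: "m \<ge> 1" by (simp add: m_def)
  have hm: "2 / (real m)\<^sup>2 \<le> \<delta> / 2"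
  proof -
    have "real m \<le> (real m)\<^sup>2" using m1 by (simp add: power2_eq_square)
    then have "4 / \<delta> \<le> (real m)\<^sup>2" unfolding m_def by linarith
    then show ?thesis using dl m1 by (simp add: field_simps)
  qed
  define Cm where "Cm = (\<Sum>k\<in>{-\<lceil>B * real m\<rceil>..\<lceil>B * real m\<rceil>}. \<bar>real_of_int k / real m\<bar>)"
  define \<eta> where "\<eta> = \<delta> / (4 * (Cm\<^sup>2 + 1))"
  have eta0: "\<eta> > 0" unfolding \<eta>_def using dl by (simp add: add_nonneg_pos)
  have "2 * Cm\<^sup>2 * \<eta> = \<delta> / 2 * (Cm\<^sup>2 / (Cm\<^sup>2 + 1))"
    unfolding \<eta>_def by (simp add: divide_simps add_nonneg_pos)
  also have "\<dots> \<le> \<delta> / 2"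
    using dl by (simp add: divide_simps add_nonneg_pos)
  finally have "2 / (real m)\<^sup>2 + 2 * Cm\<^sup>2 * \<eta> \<le> \<delta>" using hm by linarith
  then show ?thesis
    using step_graphon_quantised_l2_approx[OF gm gB g0 gs m1 eta0] unfolding Cm_def[symmetric]
    by (meson ennreal_leI order_trans)
qed

section \<open>Integral operators with bounded kernels\<close>

lemma sigma_finite_leb01: "sigma_finite_measure leb01"
proof -
  interpret finite_measure leb01 by (rule finite_measure_leb01)
  show ?thesis by unfold_locales
qed

lemma measurable_id_leb01: "(\<lambda>x::real. x) \<in> leb01 \<rightarrow>\<^sub>M borel"
  using continuous_imp_measurable_on_sets_lebesgue[of "{0..1::real}" "\<lambda>x. x"] by (simp add: continuous_on_id)

lemma measurable_id_leb01_pair: "(\<lambda>z::real\<times>real. z) \<in> (leb01 \<Otimes>\<^sub>M leb01) \<rightarrow>\<^sub>M borel"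
proof -
  have "(\<lambda>z::real\<times>real. z) \<in> (leb01 \<Otimes>\<^sub>M leb01) \<rightarrow>\<^sub>M (borel \<Otimes>\<^sub>M borel)"
    by (rule measurable_pair) (auto simp: comp_def intro!: measurable_compose[OF measurable_fst measurable_id_leb01] measurable_compose[OF measurable_snd measurable_id_leb01])
  then show ?thesis by (simp add: borel_prod)
qed

lemma borel_measurable_leb01: "f \<in> borel_measurable borel \<Longrightarrow> f \<in> borel_measurable leb01"
  using measurable_compose[OF measurable_id_leb01] by blast

lemma kernel_integral_measurable:
  fixes K :: "real \<times> real \<Rightarrow> real"
  assumes K[measurable]: "K \<in> borel_measurable borel" and h: "sq_int h"
  shows "(\<lambda>v. LINT u|leb01. K (v, u) * h u) \<in> borel_measurable leb01"
proof -
  interpret sigma_finite_measure leb01 by (rule sigma_finite_leb01)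
  have [measurable]: "h \<in> borel_measurable leb01" using sq_int_measurable[OF h] .
  have "(\<lambda>z. K z) \<in> borel_measurable (leb01 \<Otimes>\<^sub>M leb01)"
    using measurable_compose[OF measurable_id_leb01_pair K] by simp
  then have [measurable]: "(\<lambda>(v,u). K (v,u) * h u) \<in> borel_measurable (leb01 \<Otimes>\<^sub>M leb01)"
    by (simp add: case_prod_beta') measurable
  show ?thesis by (rule borel_measurable_lebesgue_integral) simp
qed

lemma kernel_integrable:
  fixes K :: "real \<times> real \<Rightarrow> real"
  assumes K[measurable]: "K \<in> borel_measurable borel" and KB: "\<And>z. \<bar>K z\<bar> \<le> C" and h: "sq_int h"
  shows "integrable leb01 (\<lambda>u. K (v, u) * h u)"
proof (rule Bochner_Integration.integrable_bound)
  show "integrable leb01 (\<lambda>u. C * \<bar>h u\<bar>)" using sq_int_integrable[OF h] by simp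
  have "(\<lambda>u. K (v, u)) \<in> borel_measurable leb01" by (rule borel_measurable_leb01) measurable
  then show "(\<lambda>u. K (v, u) * h u) \<in> borel_measurable leb01" using sq_int_measurable[OF h] by measurable
  show "AE u in leb01. norm (K (v, u) * h u) \<le> norm (C * \<bar>h u\<bar>)"
  proof (rule AE_I2)
    fix u
    have "\<bar>K (v, u)\<bar> * \<bar>h u\<bar> \<le> C * \<bar>h u\<bar>" using KB by (simp add: mult_right_mono)
    moreover have "0 \<le> C" using KB[of "(0,0)"] by linarith
    ultimately show "norm (K (v, u) * h u) \<le> norm (C * \<bar>h u\<bar>)" by (simp add: abs_mult)
  qed
qed

lemma kernel_integral_sq_int:
  fixes K :: "real \<times> real \<Rightarrow> real"
  assumes K[measurable]: "K \<in> borel_measurable borel" and KB: "\<And>z. \<bar>K z\<bar> \<le> C" and h: "sq_int h"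
  shows "sq_int (\<lambda>v. LINT u|leb01. K (v, u) * h u)"
proof (rule sq_int_bounded[OF kernel_integral_measurable[OF K h]])
  fix v :: real
  show "\<bar>LINT u|leb01. K (v, u) * h u\<bar> \<le> (LINT u|leb01. C * \<bar>h u\<bar>)"
  proof (rule integral_abs_bound_integral[OF kernel_integrable[OF K KB h]])
    show "integrable leb01 (\<lambda>u. C * \<bar>h u\<bar>)" using sq_int_integrable[OF h] by simp
    fix u show "\<bar>K (v, u) * h u\<bar> \<le> C * \<bar>h u\<bar>" using KB by (simp add: abs_mult mult_right_mono)
  qed
qed

lemma nn_integral_leb01_le_lborel:
  fixes f :: "real \<Rightarrow> ennreal"
  shows "(\<integral>\<^sup>+x. f x \<partial>leb01) \<le> (\<integral>\<^sup>+x. f x \<partial>lborel)"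
proof -
  have "(\<integral>\<^sup>+x. f x \<partial>leb01) = (\<integral>\<^sup>+x. f x * indicator {0..1} x \<partial>lebesgue)"
    by (rule nn_integral_restrict_space) simp
  also have "\<dots> \<le> (\<integral>\<^sup>+x. f x \<partial>lebesgue)"
    by (intro nn_integral_mono) (simp add: indicator_def)
  also have "\<dots> = (\<integral>\<^sup>+x. f x \<partial>lborel)" by (rule nn_integral_completion)
  finally show ?thesis .
qed

lemma integral_kernel_square_le:
  fixes D :: "real \<times> real \<Rightarrow> real"
  assumes D[measurable]: "D \<in> borel_measurable borel" and DB: "\<And>z. \<bar>D z\<bar> \<le> C"
    and dl: "(\<integral>\<^sup>+z. ennreal ((D z)\<^sup>2) \<partial>lborel) \<le> ennreal \<delta>" and d0: "0 \<le> \<delta>"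
  shows "(LINT v|leb01. LINT u|leb01. (D (v, u))\<^sup>2) \<le> \<delta>"
proof -
  define \<Phi> where "\<Phi> v = (LINT u|leb01. (D (v, u))\<^sup>2 * 1)" for v
  have D2m[measurable]: "(\<lambda>z. (D z)\<^sup>2) \<in> borel_measurable borel" by measurable
  have D2B: "\<bar>(D z)\<^sup>2\<bar> \<le> C\<^sup>2" for z
  proof -
    have "\<bar>D z\<bar>^2 \<le> C^2" using DB[of z] by (intro power_mono) auto
    then show ?thesis by simp
  qed
  have Phi0: "0 \<le> \<Phi> v" for v unfolding \<Phi>_def by (intro integral_nonneg_AE AE_I2) simp
  have Phi_int: "integrable leb01 \<Phi>"
    unfolding \<Phi>_def using sq_int_integrable[OF kernel_integral_sq_int[OF D2m D2B sq_int_const[of 1]]] .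
  have "ennreal (LINT v|leb01. \<Phi> v) = (\<integral>\<^sup>+v. ennreal (\<Phi> v) \<partial>leb01)"
    using Phi_int Phi0 by (intro nn_integral_eq_integral[symmetric]) auto
  also have "\<dots> \<le> (\<integral>\<^sup>+v. (\<integral>\<^sup>+u. ennreal ((D (v, u))\<^sup>2) \<partial>lborel) \<partial>leb01)"
  proof (intro nn_integral_mono)
    fix v
    have "ennreal (\<Phi> v) = (\<integral>\<^sup>+u. ennreal ((D (v, u))\<^sup>2 * 1) \<partial>leb01)"
      unfolding \<Phi>_def using kernel_integrable[OF D2m D2B sq_int_const[of 1]]
      by (intro nn_integral_eq_integral[symmetric]) auto
    also have "\<dots> \<le> (\<integral>\<^sup>+u. ennreal ((D (v, u))\<^sup>2) \<partial>lborel)"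
      using nn_integral_leb01_le_lborel[of "\<lambda>u. ennreal ((D (v, u))\<^sup>2)"] by simp
    finally show "ennreal (\<Phi> v) \<le> (\<integral>\<^sup>+u. ennreal ((D (v, u))\<^sup>2) \<partial>lborel)" .
  qed
  also have "\<dots> \<le> (\<integral>\<^sup>+v. (\<integral>\<^sup>+u. ennreal ((D (v, u))\<^sup>2) \<partial>lborel) \<partial>lborel)"
    by (rule nn_integral_leb01_le_lborel)
  also have "\<dots> = (\<integral>\<^sup>+z. ennreal ((D z)\<^sup>2) \<partial>(lborel \<Otimes>\<^sub>M lborel))"
  proof -
    have "(\<lambda>z. ennreal ((D z)\<^sup>2)) \<in> borel_measurable (lborel \<Otimes>\<^sub>M lborel)"
      unfolding lborel_prod by measurable
    then show ?thesis using lborel.nn_integral_fst[of "\<lambda>z. ennreal ((D z)\<^sup>2)" lborel] by simp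
  qed
  also have "\<dots> \<le> ennreal \<delta>" unfolding lborel_prod by (rule dl)
  finally have "ennreal (LINT v|leb01. \<Phi> v) \<le> ennreal \<delta>" .
  then show ?thesis using d0 by (simp add: ennreal_le_iff \<Phi>_def)
qed

lemma Hilbert_Schmidt_bound:
  fixes D :: "real \<times> real \<Rightarrow> real"
  assumes D[measurable]: "D \<in> borel_measurable borel" and DB: "\<And>z. \<bar>D z\<bar> \<le> C" and h: "sq_int h"
    and dl: "(\<integral>\<^sup>+z. ennreal ((D z)\<^sup>2) \<partial>lborel) \<le> ennreal \<delta>" and d0: "0 \<le> \<delta>"
  shows "l2_norm (\<lambda>v. LINT u|leb01. D (v, u) * h u) \<le> sqrt \<delta> * l2_norm h"
proof -
  define T where "T v = (LINT u|leb01. D (v, u) * h u)" for v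
  define \<Phi> where "\<Phi> v = (LINT u|leb01. (D (v, u))\<^sup>2)" for v
  have Dv: "sq_int (\<lambda>u. D (v, u))" for v
  proof (rule sq_int_bounded)
    show "(\<lambda>u. D (v, u)) \<in> borel_measurable leb01" by (rule borel_measurable_leb01) measurable
    show "\<bar>D (v, u)\<bar> \<le> C" for u by (rule DB)
  qed
  have Ts: "sq_int T" unfolding T_def using kernel_integral_sq_int[OF D DB h] .
  have pt: "(T v)\<^sup>2 \<le> \<Phi> v * (l2_norm h)\<^sup>2" for v
  proof -
    have "\<bar>T v\<bar> = \<bar>l2_inner (\<lambda>u. D (v, u)) h\<bar>" by (simp add: T_def l2_inner_def)
    also have "\<dots> \<le> l2_norm (\<lambda>u. D (v, u)) * l2_norm h" by (rule l2_Cauchy_Schwarz[OF Dv h])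
    finally have "\<bar>T v\<bar>\<^sup>2 \<le> (l2_norm (\<lambda>u. D (v, u)) * l2_norm h)\<^sup>2" by (intro power_mono) auto
    also have "\<dots> = \<Phi> v * (l2_norm h)\<^sup>2"
      unfolding power_mult_distrib l2_norm_sq by (simp add: \<Phi>_def l2_inner_def power2_eq_square)
    finally show ?thesis by simp
  qed
  have Phi_int: "integrable leb01 \<Phi>"
  proof -
    have D2m: "(\<lambda>z. (D z)\<^sup>2) \<in> borel_measurable borel" by measurable
    have "\<bar>(D z)\<^sup>2\<bar> \<le> C\<^sup>2" for z using DB[of z] abs_le_square_iff by fastforce
    from kernel_integral_sq_int[OF D2m this sq_int_const[of 1]]
    show ?thesis unfolding \<Phi>_def by (simp add: sq_int_integrable)
  qed
  have "(l2_norm T)\<^sup>2 = (LINT v|leb01. (T v)\<^sup>2)"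
    unfolding l2_norm_sq l2_inner_def by (simp add: power2_eq_square)
  also have "\<dots> \<le> (LINT v|leb01. \<Phi> v * (l2_norm h)\<^sup>2)"
    using sq_int_integrable_square[OF Ts] Phi_int pt by (intro integral_mono) auto
  also have "\<dots> = (LINT v|leb01. \<Phi> v) * (l2_norm h)\<^sup>2" by simp
  also have "\<dots> \<le> \<delta> * (l2_norm h)\<^sup>2"
    using integral_kernel_square_le[OF D DB dl d0] by (intro mult_right_mono) (auto simp: \<Phi>_def)
  also have "\<dots> = (sqrt \<delta> * l2_norm h)\<^sup>2" using d0 by (simp add: power_mult_distrib)
  finally have "(l2_norm T)\<^sup>2 \<le> (sqrt \<delta> * l2_norm h)\<^sup>2" .
  then have "l2_norm T \<le> sqrt \<delta> * l2_norm h"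
    by (rule power2_le_imp_le) (use l2_norm_nonneg d0 in simp)
  then show ?thesis unfolding T_def .
qed

lemma AE_lborel_swap:
  assumes "AE z in (lborel :: (real \<times> real) measure). P z"
  shows "AE z in (lborel :: (real \<times> real) measure). P (snd z, fst z)"
proof -
  have "AE z in (lborel \<Otimes>\<^sub>M lborel :: (real \<times> real) measure). P z" using assms unfolding lborel_prod .
  then have "AE z in distr (lborel \<Otimes>\<^sub>M lborel) (lborel \<Otimes>\<^sub>M lborel) (\<lambda>(x, y). (y, x)). P z"
    by (subst lborel_pair.distr_pair_swap[symmetric])
  then have "AE z in (lborel \<Otimes>\<^sub>M lborel :: (real \<times> real) measure). P ((\<lambda>(x, y). (y, x)) z)"
    by (rule AE_distrD[rotated]) measurable
  then show ?thesis unfolding lborel_prod by (simp add: case_prod_beta')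
qed

lemma graphon_unit_square_lebesgue_measurable:
  assumes W: "graphon W"
  shows "(\<lambda>x. indicator unit_square x * W (fst x) (snd x)) \<in> borel_measurable lebesgue"
proof -
  define S2 where "S2 = {0..1::real} \<times> {0..1::real}"
  have Wm: "(\<lambda>(u,v). W u v) \<in> borel_measurable (lebesgue_on S2)" using W unfolding graphon_def S2_def by blast
  have "S2 \<in> sets (borel \<Otimes>\<^sub>M borel)" unfolding S2_def by (intro pair_measureI) auto
  then have S2l: "S2 \<in> sets lebesgue" by (simp only: borel_prod) simp
  have "(\<lambda>x. indicator S2 x *\<^sub>R (case x of (u, v) \<Rightarrow> W u v)) \<in> borel_measurable lebesgue"
    using Wm borel_measurable_restrict_space_iff[of S2 lebesgue "\<lambda>(u,v). W u v"] S2l by simp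
  then have m1: "(\<lambda>x. indicator S2 x * W (fst x) (snd x)) \<in> borel_measurable lebesgue"
    by (simp add: case_prod_beta')
  have "unit_square \<subseteq> S2" unfolding unit_square_def S2_def by auto
  then have "(\<lambda>x. indicator unit_square x * W (fst x) (snd x))
      = (\<lambda>x. indicator unit_square x * (indicator S2 x * W (fst x) (snd x)))"
    by (auto simp: indicator_def fun_eq_iff)
  moreover have "(\<lambda>x. indicator unit_square x * (indicator S2 x * W (fst x) (snd x))) \<in> borel_measurable lebesgue"
  proof (rule borel_measurable_times[OF _ m1])
    show "indicator unit_square \<in> borel_measurable lebesgue"
      using unit_square_borel by (intro borel_measurable_indicator) simp
  qed
  ultimately show ?thesis by simp
qed

lemma unit_square_borel_representative:
  fixes F :: "real \<times> real \<Rightarrow> real"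
  assumes Fm: "F \<in> borel_measurable (completion lborel)" and FB: "\<And>x. \<bar>F x\<bar> \<le> B"
    and F0: "\<And>x. x \<notin> unit_square \<Longrightarrow> F x = 0"
  obtains g where "g \<in> borel_measurable borel" "\<And>x. \<bar>g x\<bar> \<le> B"
    "\<And>x. x \<notin> unit_square \<Longrightarrow> g x = 0" "AE x in lborel. F x = g x"
proof -
  obtain g' where g': "g' \<in> borel_measurable lborel" "AE x in lborel. F x = g' x"
    using completion_ex_borel_measurable_real[OF Fm] by blast
  have [measurable]: "g' \<in> borel_measurable borel" using g'(1) by simp
  define g where "g x = indicator unit_square x * max (-B) (min B (g' x))" for x
  have "g \<in> borel_measurable borel" unfolding g_def using unit_square_borel by measurable
  moreover have "\<bar>g x\<bar> \<le> B" for x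
    using FB[of x] unfolding g_def by (auto simp: indicator_def)
  moreover have "g x = 0" if "x \<notin> unit_square" for x
    using that unfolding g_def by simp
  moreover have "AE x in lborel. F x = g x"
    using g'(2)
  proof (rule eventually_mono)
    fix x assume "F x = g' x"
    then show "F x = g x" using FB[of x] F0[of x] unfolding g_def
      by (cases "x \<in> unit_square") (auto simp: indicator_def)
  qed
  ultimately show ?thesis using that by blast
qed

lemma graphon_borel_representative:
  assumes W: "graphon W"
  shows "\<exists>g B. g \<in> borel_measurable borel \<and> (\<forall>z. \<bar>g z\<bar> \<le> B) \<and> (\<forall>z. z \<notin> unit_square \<longrightarrow> g z = 0) \<and>
     (\<forall>a b. g (a, b) = g (b, a)) \<and> (AE z in lborel. z \<in> unit_square \<longrightarrow> W (fst z) (snd z) = g z)"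
proof -
  obtain B where B: "\<forall>u\<in>{0..1}. \<forall>v\<in>{0..1}. \<bar>W u v\<bar> \<le> B" using W unfolding graphon_def by blast
  have B0: "0 \<le> B" using B by (metis abs_ge_zero atLeastAtMost_iff order_trans zero_le_one order_refl)
  have Wsym: "\<forall>u\<in>{0..1}. \<forall>v\<in>{0..1}. W u v = W v u" using W unfolding graphon_def by blast
  define F where "F x = indicator unit_square x * W (fst x) (snd x)" for x
  have Fm: "F \<in> borel_measurable (completion lborel)"
    using graphon_unit_square_lebesgue_measurable[OF W] unfolding F_def by simp
  have FB: "\<bar>F x\<bar> \<le> B" for x
    using B B0 unfolding F_def by (auto simp: indicator_def unit_square_def mem_Times_iff)
  have F0: "F x = 0" if "x \<notin> unit_square" for x using that unfolding F_def by simp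
  obtain g1 where g1m[measurable]: "g1 \<in> borel_measurable borel" and g1B: "\<And>x. \<bar>g1 x\<bar> \<le> B"
    and g10: "\<And>x. x \<notin> unit_square \<Longrightarrow> g1 x = 0" and Fg1: "AE x in lborel. F x = g1 x"
    using unit_square_borel_representative[OF Fm FB F0] by blast
  have Fswap: "F (snd x, fst x) = F x" for x
  proof (cases "x \<in> unit_square")
    case True
    then have "(snd x, fst x) \<in> unit_square" "fst x \<in> {0..1}" "snd x \<in> {0..1}" by (auto simp: unit_square_def mem_Times_iff)
    then show ?thesis using True Wsym unfolding F_def by simp
  next
    case False
    then have "(snd x, fst x) \<notin> unit_square" by (auto simp: unit_square_def mem_Times_iff)
    then show ?thesis using False unfolding F_def by simp
  qed
  have Fg1s: "AE x in lborel. F (snd x, fst x) = g1 (snd x, fst x)"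
    using AE_lborel_swap[OF Fg1] by simp
  define g where "g x = (g1 x + g1 (snd x, fst x)) / 2" for x
  have swm: "(\<lambda>x::real\<times>real. (snd x, fst x)) \<in> borel \<rightarrow>\<^sub>M borel"
    by (intro borel_measurable_continuous_onI continuous_intros)
  have "(\<lambda>x. g1 (snd x, fst x)) \<in> borel_measurable borel"
    using measurable_compose[OF swm g1m] by simp
  then have gm: "g \<in> borel_measurable borel" unfolding g_def by measurable
  have gB: "\<bar>g z\<bar> \<le> B" for z
    using g1B[of z] g1B[of "(snd z, fst z)"] unfolding g_def by (simp add: abs_le_iff)
  have g0: "g z = 0" if "z \<notin> unit_square" for z
  proof -
    have "(snd z, fst z) \<notin> unit_square" using that by (auto simp: unit_square_def mem_Times_iff)
    then show ?thesis using that g10 unfolding g_def by simp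
  qed
  have gs: "g (a, b) = g (b, a)" for a b unfolding g_def by simp
  have "AE z in lborel. z \<in> unit_square \<longrightarrow> W (fst z) (snd z) = g z"
    using Fg1 Fg1s
  proof (eventually_elim)
    case (elim z)
    show ?case
    proof
      assume "z \<in> unit_square"
      then have "F z = W (fst z) (snd z)" unfolding F_def by simp
      moreover have "g z = (F z + F (snd z, fst z)) / 2" unfolding g_def using elim by simp
      ultimately show "W (fst z) (snd z) = g z" using Fswap[of z] by simp
    qed
  qed
  then show ?thesis using gm gB g0 gs by blast
qed

lemma AE_lborel_imp_AE_leb01:
  assumes "AE x in lborel. P x"
  shows "AE x in leb01. P x"
proof -
  have "AE x in lebesgue. P x" using assms by (rule AE_completion)
  then have "AE x in lebesgue. x \<in> {0..1} \<longrightarrow> P x" by (auto elim: eventually_mono)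
  then show ?thesis by (subst AE_restrict_space_iff) auto
qed

lemma T_op_AE_eq_kernel:
  fixes g :: "real \<times> real \<Rightarrow> real"
  assumes gm[measurable]: "g \<in> borel_measurable borel" and gB: "\<And>z. \<bar>g z\<bar> \<le> B"
    and AEg: "AE z in lborel. z \<in> unit_square \<longrightarrow> W (fst z) (snd z) = g z" and h: "sq_int h"
  shows "AE v in leb01. T_op W h v = (LINT u|leb01. g (v, u) * h u)"
proof -
  have "AE z in (lborel \<Otimes>\<^sub>M lborel :: (real \<times> real) measure). z \<in> unit_square \<longrightarrow> W (fst z) (snd z) = g z"
    using AEg unfolding lborel_prod .
  then have "AE v in lborel. AE u in lborel. (v, u) \<in> unit_square \<longrightarrow> W v u = g (v, u)"
    using lborel_pair.AE_pair by fastforce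
  then have G: "AE v in leb01. AE u in lborel. (v, u) \<in> unit_square \<longrightarrow> W v u = g (v, u)"
    by (rule AE_lborel_imp_AE_leb01)
  have N1: "AE v in leb01. v \<noteq> 1" using AE_lborel_singleton[of "1::real"] by (rule AE_lborel_imp_AE_leb01)
  have I: "AE v in leb01. v \<in> {0..1}" by (rule AE_I2) simp
  show ?thesis
    using G N1 I
  proof (eventually_elim)
    case (elim v)
    then have v: "v \<in> {0..<1}" by auto
    have "AE u in leb01. (v, u) \<in> unit_square \<longrightarrow> W v u = g (v, u)" using elim(1) by (rule AE_lborel_imp_AE_leb01)
    moreover have "AE u in leb01. u \<noteq> 1" using AE_lborel_singleton[of "1::real"] by (rule AE_lborel_imp_AE_leb01)
    moreover have "AE u in leb01. u \<in> {0..1}" by (rule AE_I2) simp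
    ultimately have ae: "AE u in leb01. g (v, u) * h u = W v u * h u"
    proof (eventually_elim)
      case (elim u)
      then have "(v, u) \<in> unit_square" using v by (auto simp: unit_square_def)
      then show ?case using elim by simp
    qed
    have m1: "(\<lambda>u. g (v, u) * h u) \<in> borel_measurable leb01"
      using kernel_integrable[OF gm gB h] by (rule borel_measurable_integrable)
    have m2: "(\<lambda>u. W v u * h u) \<in> borel_measurable leb01" by (rule borel_measurable_lebesgue_on_AE_cong[OF _ m1 ae]) simp
    have "(LINT u|leb01. W v u * h u) = (LINT u|leb01. g (v, u) * h u)"
      using m1 m2 ae by (intro integral_cong_AE) (auto elim: eventually_mono)
    then show ?case by (simp add: T_op_def)
  qed
qed

lemma kernel_operator_approx:
  fixes S g :: "real \<times> real \<Rightarrow> real"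
  assumes Sm[measurable]: "S \<in> borel_measurable borel" and SB: "\<And>z. \<bar>S z\<bar> \<le> C"
    and gm[measurable]: "g \<in> borel_measurable borel" and gB: "\<And>z. \<bar>g z\<bar> \<le> B"
    and AEg: "AE z in lborel. z \<in> unit_square \<longrightarrow> W (fst z) (snd z) = g z"
    and dl: "(\<integral>\<^sup>+z. ennreal ((S z - g z)\<^sup>2) \<partial>lborel) \<le> ennreal (\<epsilon>\<^sup>2)" and e: "\<epsilon> \<ge> 0"
    and h: "sq_int h"
  shows "l2_norm (\<lambda>v. (LINT u|leb01. S (v, u) * h u) - T_op W h v) \<le> \<epsilon> * l2_norm h"
proof -
  define TS where "TS = (\<lambda>v. LINT u|leb01. S (v, u) * h u)"
  define Tg where "Tg = (\<lambda>v. LINT u|leb01. g (v, u) * h u)"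
  have TSs: "sq_int TS" unfolding TS_def using kernel_integral_sq_int[OF Sm SB h] .
  have Tgs: "sq_int Tg" unfolding Tg_def using kernel_integral_sq_int[OF gm gB h] .
  have Dm: "(\<lambda>z. S z - g z) \<in> borel_measurable borel" by measurable
  have DB: "\<bar>S z - g z\<bar> \<le> C + B" for z using SB[of z] gB[of z] by linarith
  have "(\<lambda>v. TS v - Tg v) = (\<lambda>v. LINT u|leb01. (S (v, u) - g (v, u)) * h u)"
  proof
    fix v
    have "TS v - Tg v = (LINT u|leb01. S (v, u) * h u - g (v, u) * h u)"
      unfolding TS_def Tg_def using kernel_integrable[OF Sm SB h] kernel_integrable[OF gm gB h]
      by (rule Bochner_Integration.integral_diff[symmetric])
    then show "TS v - Tg v = (LINT u|leb01. (S (v, u) - g (v, u)) * h u)"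
      by (simp add: left_diff_distrib)
  qed
  then have b: "l2_norm (\<lambda>v. TS v - Tg v) \<le> \<epsilon> * l2_norm h"
    using Hilbert_Schmidt_bound[OF Dm DB h dl] e by simp
  have "AE v in leb01. T_op W h v = Tg v" unfolding Tg_def using T_op_AE_eq_kernel[OF gm gB AEg h] .
  then have "ae_eq (\<lambda>v. TS v - Tg v) (\<lambda>v. TS v - T_op W h v)"
    unfolding ae_eq_def by (auto elim: eventually_mono)
  then show ?thesis
    using l2_norm_ae[OF sq_int_diff[OF TSs Tgs]] b unfolding TS_def by simp
qed

lemma graphon_step_operator_approx:
  assumes W: "graphon W" and e: "\<epsilon> > 0"
  shows "\<exists>N\<ge>1. \<exists>a. (\<forall>i j. a i j = a j i) \<and> (\<forall>h. sq_int h \<longrightarrow>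
      sq_int (T_op (induced_graphon N a) h) \<and>
      l2_norm (\<lambda>x. T_op (induced_graphon N a) h x - T_op W h x) \<le> \<epsilon> * l2_norm h)"
proof -
  obtain g B where gm: "g \<in> borel_measurable borel" and gB: "\<And>z. \<bar>g z\<bar> \<le> B"
    and g0: "\<And>z. z \<notin> unit_square \<Longrightarrow> g z = 0" and gs: "\<And>a b. g (a, b) = g (b, a)"
    and AEg: "AE z in lborel. z \<in> unit_square \<longrightarrow> W (fst z) (snd z) = g z"
    using graphon_borel_representative[OF W] by blast
  have e2: "\<epsilon>\<^sup>2 > 0" using e by simp
  obtain N a where N1: "N \<ge> 1" and asym: "\<forall>i j. a i j = a j i"
    and dl: "(\<integral>\<^sup>+z. ennreal ((induced_graphon N a (fst z) (snd z) - g z)\<^sup>2) \<partial>lborel) \<le> ennreal (\<epsilon>\<^sup>2)"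
    using step_graphon_l2_approx[OF gm gB g0 gs e2] by blast
  define S where "S z = induced_graphon N a (fst z) (snd z)" for z
  have Sm: "S \<in> borel_measurable borel"
    unfolding S_def by (rule borel_measurable_induced_graphon)
  have SB: "\<bar>S z\<bar> \<le> (\<Sum>i\<in>{1..N}. \<Sum>j\<in>{1..N}. \<bar>a i j\<bar>)" for z
    unfolding S_def by (rule abs_induced_graphon_le[OF N1])
  have T_S: "T_op (induced_graphon N a) h = (\<lambda>v. LINT u|leb01. S (v, u) * h u)" for h
    by (simp add: T_op_def S_def)
  have "sq_int (T_op (induced_graphon N a) h) \<and>
      l2_norm (\<lambda>x. T_op (induced_graphon N a) h x - T_op W h x) \<le> \<epsilon> * l2_norm h" if h: "sq_int h" for h
    unfolding T_S using kernel_integral_sq_int[OF Sm SB h]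
      kernel_operator_approx[OF Sm SB gm gB AEg _ _ h, of \<epsilon>] dl e by (simp add: S_def)
  then show ?thesis using N1 asym by blast
qed

section \<open>Convergence to the graphon shift operator\<close>

lemma graphon_step_operator_approx_sequence:
  assumes W: "\<And>n. graphon (W n)"
  obtains N a where "\<And>n. N n \<ge> 1" "\<And>n i j. a n i j = a n j i"
    "\<And>n h. sq_int h \<Longrightarrow> sq_int (T_op (induced_graphon (N n) (a n)) h)"
    "\<And>n h. sq_int h \<Longrightarrow>
       l2_norm (\<lambda>x. T_op (induced_graphon (N n) (a n)) h x - T_op (W n) h x) \<le> 1 / (real n + 1) * l2_norm h"
proof -
  define good where "good n N a \<longleftrightarrow> N \<ge> 1 \<and> (\<forall>i j. a i j = a j i) \<and> (\<forall>h. sq_int h \<longrightarrow>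
      sq_int (T_op (induced_graphon N a) h) \<and>
      l2_norm (\<lambda>x. T_op (induced_graphon N a) h x - T_op (W n) h x) \<le> 1 / (real n + 1) * l2_norm h)"
    for n N and a :: "nat \<Rightarrow> nat \<Rightarrow> real"
  have "\<exists>Na. good n (fst Na) (snd Na)" for n
  proof -
    have "1 / (real n + 1) > 0" by simp
    from graphon_step_operator_approx[OF W this] obtain N a where "good n N a"
      unfolding good_def by blast
    then show ?thesis by (intro exI[of _ "(N, a)"]) simp
  qed
  then obtain Na where Na: "\<And>n. good n (fst (Na n)) (snd (Na n))" by metis
  show ?thesis
  proof (rule that[of "\<lambda>n. fst (Na n)" "\<lambda>n. snd (Na n)"])
    fix n i j h
    show "fst (Na n) \<ge> 1" "snd (Na n) i j = snd (Na n) j i" using Na[of n] by (simp_all add: good_def)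
    assume "sq_int h"
    then show "sq_int (T_op (induced_graphon (fst (Na n)) (snd (Na n))) h)"
      "l2_norm (\<lambda>x. T_op (induced_graphon (fst (Na n)) (snd (Na n))) h x - T_op (W n) h x)
        \<le> 1 / (real n + 1) * l2_norm h"
      using Na[of n] by (simp_all add: good_def)
  qed
qed

lemma compressions_converge:
  assumes L: "unbounded_GSO D L"
    and W: "\<And>n. spectral_graphon D L (real n + 1) (W n)"
    and K: "\<And>n h. sq_int h \<Longrightarrow> sq_int (K n h)"
    and K_approx: "\<And>n h. sq_int h \<Longrightarrow> l2_norm (\<lambda>x. K n h x - T_op (W n) h x) \<le> 1 / (real n + 1) * l2_norm h"
    and lam: "lam > 0" and e: "e > 0"
  shows "\<forall>\<^sub>F n in sequentially. \<forall>f. sq_int f \<longrightarrow>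
    l2_norm (\<lambda>x. spec_proj D L lam (K n (spec_proj D L lam f)) x - L (spec_proj D L lam f) x) \<le> e * l2_norm f"
  unfolding eventually_sequentially
proof (intro exI allI impI)
  fix n f assume n: "max (nat \<lceil>lam\<rceil>) (nat \<lceil>1 / e\<rceil>) \<le> n" and f: "sq_int f"
  obtain Wl where Wl: "spectral_graphon D L lam Wl" using unbounded_GSO_spectral_graphon[OF L lam] by blast
  have "lam \<le> real n + 1" "1 / e \<le> real n" using n by linarith+
  then have en: "1 / (real n + 1) \<le> e" using e by (simp add: field_simps)
  have "l2_norm (\<lambda>x. spec_proj D L lam (K n (spec_proj D L lam f)) x - L (spec_proj D L lam f) x)
      \<le> 1 / (real n + 1) * l2_norm f"
    using compressed_operator_approx[OF unbounded_GSO_self_adjoint[OF L] Wl W \<open>lam \<le> real n + 1\<close> K K_approx _ f]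
    by simp
  also have "\<dots> \<le> e * l2_norm f" using en l2_norm_nonneg by (rule mult_right_mono)
  finally show "l2_norm (\<lambda>x. spec_proj D L lam (K n (spec_proj D L lam f)) x - L (spec_proj D L lam f) x)
      \<le> e * l2_norm f" .
qed

theorem proposition4p12:
  fixes D :: "(real \<Rightarrow> real) set" and L :: "(real \<Rightarrow> real) \<Rightarrow> (real \<Rightarrow> real)"
  assumes "unbounded_GSO D L"
  shows "\<exists>(N :: nat \<Rightarrow> nat) (\<Delta> :: nat \<Rightarrow> nat \<Rightarrow> nat \<Rightarrow> real).
           (\<forall>n. is_GSO (N n) (\<Delta> n)) \<and> graphs_converge_U N \<Delta> D L"
proof -
  have "\<forall>n. \<exists>W. spectral_graphon D L (real n + 1) W"
    using unbounded_GSO_spectral_graphon[OF assms] by simp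
  from choice[OF this] obtain W where W: "\<And>n. spectral_graphon D L (real n + 1) (W n)" by blast
  then have graphon_W: "graphon (W n)" for n by (simp add: spectral_graphon_def)
  obtain N a where N: "\<And>n. N n \<ge> 1" and sym: "\<And>n i j. a n i j = a n j i"
    and approx: "\<And>n h. sq_int h \<Longrightarrow> sq_int (T_op (induced_graphon (N n) (a n)) h)"
      "\<And>n h. sq_int h \<Longrightarrow> l2_norm (\<lambda>x. T_op (induced_graphon (N n) (a n)) h x - T_op (W n) h x)
                             \<le> 1 / (real n + 1) * l2_norm h"
    by (rule graphon_step_operator_approx_sequence[of W, OF graphon_W], rule that)
  define \<Delta> where "\<Delta> n i j = a n i j / real (N n)" for n i j
  have "is_GSO (N n) (\<Delta> n)" for n
    using N[of n] sym by (simp add: is_GSO_def \<Delta>_def)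
  moreover have "perm_mat id (GWM (N n) (\<Delta> n)) = a n" for n
    using N[of n] by (auto simp: perm_mat_def GWM_def \<Delta>_def fun_eq_iff)
  then have "graphs_converge_U N \<Delta> D L"
    unfolding graphs_converge_U_def
    using compressions_converge[OF assms W approx] permutes_id by (intro exI[of _ "\<lambda>n. id"]) auto
  ultimately show ?thesis by blast
qed

end
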